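(* Let $m\ge3$. Then $\dim T=4\binom{m+4}{4}$.
   Context: $S=\{1,\dots,2m+1\}$, $X=\binom{S}{m}\cup\binom{S}{m+1}$; the doubled Odd graph $2.O_{m+1}$ has vertex set $X$, two vertices adjacent iff one is a proper subset of the other, with distance $\partial$. $x_0=\{1,\dots,m\}$. $T=T(x_0)$ is the subalgebra of complex $X\times X$ matrices generated by the adjacency matrix $A_1$ and the dual idempotents $E^*_i$ ($0\le i\le 2m+1$), where $E^*_i$ is diagonal with $(y,y)$-entry $1$ iff $\partial(x_0,y)=i$. *)

theory Defs
  imports Complex_Main "HOL-Library.Function_Algebras"
begin

text \<open>Complex X-by-X matrices are represented as functions
  nat set => nat set => complex; all matrices considered here vanish outside X x X.\<close>

type_synonym mx = "nat set \<Rightarrow> nat set \<Rightarrow> complex"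

definition Xv :: "nat \<Rightarrow> nat set set" where
  "Xv m = {y. y \<subseteq> {1..2*m+1} \<and> (card y = m \<or> card y = m + 1)}"

definition adj :: "nat \<Rightarrow> nat set \<Rightarrow> nat set \<Rightarrow> bool" where
  "adj m x y \<longleftrightarrow> x \<in> Xv m \<and> y \<in> Xv m \<and> (x \<subset> y \<or> y \<subset> x)"

inductive walk :: "nat \<Rightarrow> nat \<Rightarrow> nat set \<Rightarrow> nat set \<Rightarrow> bool" for m where
  walk_nil: "x \<in> Xv m \<Longrightarrow> walk m 0 x x"
| walk_step: "adj m x z \<Longrightarrow> walk m k z y \<Longrightarrow> walk m (Suc k) x y"

definition gdist :: "nat \<Rightarrow> nat set \<Rightarrow> nat set \<Rightarrow> nat" where
  "gdist m x y = (LEAST k. walk m k x y)"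

definition x0 :: "nat \<Rightarrow> nat set" where
  "x0 m = {1..m}"

definition A1 :: "nat \<Rightarrow> mx" where
  "A1 m = (\<lambda>x y. if adj m x y then 1 else 0)"

definition Estar :: "nat \<Rightarrow> nat \<Rightarrow> mx" where
  "Estar m i = (\<lambda>x y. if x \<in> Xv m \<and> x = y \<and> gdist m (x0 m) x = i then 1 else 0)"

definition Imx :: "nat \<Rightarrow> mx" where
  "Imx m = (\<lambda>x y. if x \<in> Xv m \<and> x = y then 1 else 0)"

definition mmult :: "nat \<Rightarrow> mx \<Rightarrow> mx \<Rightarrow> mx" where
  "mmult m M N = (\<lambda>x z. \<Sum>y\<in>Xv m. M x y * N y z)"

definition mscale :: "complex \<Rightarrow> mx \<Rightarrow> mx" where
  "mscale c M = (\<lambda>x y. c * M x y)"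

inductive_set Talg :: "nat \<Rightarrow> mx set" for m where
  T_A: "A1 m \<in> Talg m"
| T_E: "i \<le> 2*m+1 \<Longrightarrow> Estar m i \<in> Talg m"
| T_I: "Imx m \<in> Talg m"
| T_add: "M \<in> Talg m \<Longrightarrow> N \<in> Talg m \<Longrightarrow> M + N \<in> Talg m"
| T_scale: "M \<in> Talg m \<Longrightarrow> mscale c M \<in> Talg m"
| T_mult: "M \<in> Talg m \<Longrightarrow> N \<in> Talg m \<Longrightarrow> mmult m M N \<in> Talg m"

end

theory Submission
  imports Defs
begin

text \<open>Write \<open>A = x0 = {1..m}\<close> and \<open>B = {m+1..2m+1}\<close>. The distance of a vertex \<open>y\<close> from \<open>x0\<close>
  is determined by \<open>|y|\<close> and \<open>|y \<inter> B|\<close>, so every matrix of \<open>T\<close> is invariant under the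
  stabilizer \<open>Sym(A) \<times> Sym(B)\<close> of \<open>x0\<close>, whose orbits on pairs \<open>(y, z)\<close> are classified by the
  sizes of \<open>y\<close>, \<open>z\<close> and \<open>y \<inter> z\<close> inside \<open>A\<close> and inside \<open>B\<close>. Conversely, products of the
  form \<open>E\<^sup>*\<^sub>i A E\<^sup>*\<^sub>k A E\<^sup>*\<^sub>i\<close> (exchanging one element inside a block) and
  \<open>E\<^sup>*\<^sub>i A E\<^sup>*\<^sub>i\<^sub>+\<^sub>1 A \<dots>\<close> (climbing the levels) yield, for each orbit, an element of \<open>T\<close>
  that is nonzero on it and whose other orbits have larger overlaps \<open>|y \<inter> z|\<close>; downward
  induction on the overlap puts every orbit indicator into \<open>T\<close>. So \<open>dim T\<close> is the number of
  orbits, and counting the admissible size tuples gives \<open>4 \<cdot> C(m+4, 4)\<close>.\<close>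

section \<open>Finite sets\<close>

lemma exists_bij_betw_relabel:
  assumes "finite P" and same_fibres: "\<And>i. card {x\<in>P. \<kappa> x = i} = card {x\<in>P. \<kappa>' x = i}"
  shows "\<exists>h. bij_betw h P P \<and> (\<forall>x\<in>P. \<kappa>' (h x) = \<kappa> x)"
proof -
  have "\<forall>i. \<exists>g. bij_betw g {x\<in>P. \<kappa> x = i} {x\<in>P. \<kappa>' x = i}"
    using assms by (auto intro: finite_same_card_bij)
  then obtain g where g: "\<And>i. bij_betw (g i) {x\<in>P. \<kappa> x = i} {x\<in>P. \<kappa>' x = i}"
    by metis
  define h where "h x = g (\<kappa> x) x" for x
  have maps: "h x \<in> P \<and> \<kappa>' (h x) = \<kappa> x" if "x \<in> P" for x
    using bij_betwE[OF g] that by (auto simp: h_def)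
  have "inj_on h P"
  proof (rule inj_onI)
    fix x y assume xy: "x \<in> P" "y \<in> P" "h x = h y"
    then have "\<kappa> x = \<kappa> y" using maps by metis
    with xy show "x = y"
      using bij_betw_imp_inj_on[OF g[of "\<kappa> x"]] by (auto simp: h_def inj_on_def)
  qed
  moreover have "P \<subseteq> h ` P"
  proof
    fix y assume "y \<in> P"
    then obtain x where "x \<in> P" "\<kappa> x = \<kappa>' y" "y = g (\<kappa>' y) x"
      using g[of "\<kappa>' y"] by (auto simp: bij_betw_def)
    then show "y \<in> h ` P" by (metis h_def image_eqI)
  qed
  ultimately show ?thesis
    using maps by (auto simp: bij_betw_def)
qed

lemma bij_betw_relabel_image:
  assumes "bij_betw h P P" "\<forall>x\<in>P. \<kappa>' (h x) = \<kappa> x"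
  shows "h ` {x\<in>P. Q (\<kappa> x)} = {x\<in>P. Q (\<kappa>' x)}"
proof
  show "h ` {x\<in>P. Q (\<kappa> x)} \<subseteq> {x\<in>P. Q (\<kappa>' x)}"
    using assms by (auto simp: bij_betw_def)
next
  show "{x\<in>P. Q (\<kappa>' x)} \<subseteq> h ` {x\<in>P. Q (\<kappa> x)}"
  proof
    fix y assume y: "y \<in> {x\<in>P. Q (\<kappa>' x)}"
    then obtain x where "x \<in> P" "y = h x" using assms(1) by (auto simp: bij_betw_def)
    then show "y \<in> h ` {x\<in>P. Q (\<kappa> x)}" using y assms(2) by auto
  qed
qed

lemma card_venn_region:
  assumes "finite P"
  shows "card {x\<in>P. (x \<in> u) = a \<and> (x \<in> v) = b} =
    (if a \<and> b then card (P \<inter> u \<inter> v)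
     else if a then card (P \<inter> u) - card (P \<inter> u \<inter> v)
     else if b then card (P \<inter> v) - card (P \<inter> u \<inter> v)
     else card P + card (P \<inter> u \<inter> v) - card (P \<inter> u) - card (P \<inter> v))"
proof -
  have fin: "finite (P \<inter> u)" "finite (P \<inter> v)" using assms by auto
  have union: "card (P \<inter> u \<union> P \<inter> v) + card (P \<inter> u \<inter> v) = card (P \<inter> u) + card (P \<inter> v)"
    using card_Un_Int[OF fin] by (simp add: Int_ac)
  consider "a" "b" | "a" "\<not> b" | "\<not> a" "b" | "\<not> a" "\<not> b" by blast
  then show ?thesis
  proof cases
    case 1
    then have "{x\<in>P. (x \<in> u) = a \<and> (x \<in> v) = b} = P \<inter> u \<inter> v" by auto
    then show ?thesis using 1 by simp
  next
    case 2
    then have "{x\<in>P. (x \<in> u) = a \<and> (x \<in> v) = b} = P \<inter> u - P \<inter> u \<inter> v" by auto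
    then show ?thesis using 2 fin card_Diff_subset[of "P \<inter> u \<inter> v" "P \<inter> u"] by auto
  next
    case 3
    then have "{x\<in>P. (x \<in> u) = a \<and> (x \<in> v) = b} = P \<inter> v - P \<inter> u \<inter> v" by auto
    then show ?thesis using 3 fin card_Diff_subset[of "P \<inter> u \<inter> v" "P \<inter> v"] by auto
  next
    case 4
    then have "{x\<in>P. (x \<in> u) = a \<and> (x \<in> v) = b} = P - (P \<inter> u \<union> P \<inter> v)" by auto
    moreover have "card (P \<inter> u \<union> P \<inter> v) \<le> card P" using assms by (intro card_mono) auto
    ultimately show ?thesis
      using 4 assms union card_Diff_subset[of "P \<inter> u \<union> P \<inter> v" P] by auto
  qed
qed

lemma card_Diff_triangle:
  assumes "finite a" "finite b"
  shows "card (a - c) \<le> card (a - b) + card (b - c)"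
proof -
  have "card (a - c) \<le> card ((a - b) \<union> (b \<inter> a - c))"
    using assms by (intro card_mono) auto
  also have "\<dots> \<le> card (a - b) + card (b \<inter> a - c)" by (rule card_Un_le)
  also have "card (b \<inter> a - c) \<le> card (b - c)"
    using assms by (intro card_mono) auto
  finally show ?thesis by simp
qed

lemma card_Int_ge_if_card_Diff_le:
  assumes "finite Y" "finite P" "card Y = card P" "card (Y - Z) \<le> card (P - Q)"
  shows "card (P \<inter> Q) \<le> card (Y \<inter> Z)"
  using assms card_Diff_subset_Int[of Y Z] card_Diff_subset_Int[of P Q]
    card_mono[of Y "Y \<inter> Z"] card_mono[of P "P \<inter> Q"] by simp

lemma card_Diff_le_through_superset:
  assumes fin: "finite Y" "finite U" "finite P" "finite Q"
    and "Z \<subseteq> U" "card U = card P" "card Z = card Q" "card (Y - U) \<le> card (Q - P)"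
  shows "card (Y - Z) \<le> card (P - Q)"
proof -
  have "card (Y - Z) \<le> card (Y - U) + card (U - Z)"
    using card_Diff_triangle fin(1,2) by blast
  moreover have "card (U - Z) = card P - card Q"
    using assms by (simp add: card_Diff_subset finite_subset)
  moreover have "card Q \<le> card P" using assms card_mono by metis
  moreover have "card (P \<inter> Q) \<le> card Q" using fin by (intro card_mono) auto
  ultimately show ?thesis
    using assms(8) fin by (simp add: card_Diff_subset_Int Int_commute)
qed

lemma exists_superset_of_card:
  assumes "finite P" "finite Q" "card Q \<le> card P"
  obtains V where "Q \<subseteq> V" "V \<subseteq> P \<union> Q" "card V = card P" "card (P - V) = card (Q - P)"
proof -
  have PQ: "card (P - Q) = card P - card (P \<inter> Q)" "card (Q - P) = card Q - card (P \<inter> Q)"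
    using assms by (simp_all add: card_Diff_subset_Int Int_commute)
  moreover have "card (P \<inter> Q) \<le> card Q" using assms by (intro card_mono) auto
  ultimately have "card P - card Q \<le> card (P - Q)" by simp
  then obtain T where T: "T \<subseteq> P - Q" "card T = card P - card Q" and fin: "finite T"
    by (rule obtain_subset_with_card_n)
  have "card (Q \<union> T) = card P"
    using T fin assms by (subst card_Un_disjoint) auto
  moreover have "card (P - (Q \<union> T)) = card (Q - P)"
  proof -
    have "P - (Q \<union> T) = (P - Q) - T" by blast
    then show ?thesis using T PQ fin assms \<open>card (P \<inter> Q) \<le> card Q\<close> by (simp add: card_Diff_subset)
  qed
  ultimately show thesis using that[of "Q \<union> T"] T by blast
qed

lemma exists_subset_of_card:
  assumes "finite R" "finite U" "card R \<le> card U"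
  obtains W where "W \<subseteq> U" "R \<inter> U \<subseteq> W" "card W = card R" "card (R - W) = card (R - U)"
proof -
  have "card (U - R) = card U - card (R \<inter> U)"
    using assms by (simp add: card_Diff_subset_Int Int_commute)
  then have "card R - card (R \<inter> U) \<le> card (U - R)" using assms(3) by simp
  then obtain T where T: "T \<subseteq> U - R" "card T = card R - card (R \<inter> U)" and fin: "finite T"
    by (rule obtain_subset_with_card_n)
  have "card (R \<inter> U) \<le> card R" using assms by (intro card_mono) auto
  then have "card (R \<inter> U \<union> T) = card R"
    using T fin assms by (subst card_Un_disjoint) auto
  moreover have "R - (R \<inter> U \<union> T) = R - U" using T by blast
  ultimately show thesis using that[of "R \<inter> U \<union> T"] T by auto
qed

lemma exists_subsets_with_cards:
  assumes "finite P" "c \<le> a" "c \<le> b" "a + b \<le> card P + c"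
  obtains u v where "u \<subseteq> P" "v \<subseteq> P" "card u = a" "card v = b" "card (u \<inter> v) = c"
proof -
  obtain f where f: "bij_betw f {0..<card P} P" using ex_bij_betw_nat_finite[OF assms(1)] by blast
  then have inj: "inj_on f {0..<card P}" by (simp add: bij_betw_def)
  have sub: "{0..<a} \<subseteq> {0..<card P}" "{a - c..<a - c + b} \<subseteq> {0..<card P}" "{a - c..<a} \<subseteq> {0..<card P}"
    using assms by auto
  have "f ` {0..<a} \<inter> f ` {a - c..<a - c + b} = f ` ({0..<a} \<inter> {a - c..<a - c + b})"
    using inj_on_image_Int[OF inj sub(1,2)] by simp
  also have "{0..<a} \<inter> {a - c..<a - c + b} = {a - c..<a}" using assms by auto
  finally have "card (f ` {0..<a} \<inter> f ` {a - c..<a - c + b}) = c"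
    using card_image[OF inj_on_subset[OF inj sub(3)]] assms by simp
  moreover have "f ` {0..<a} \<subseteq> P" "f ` {a - c..<a - c + b} \<subseteq> P"
    using f sub by (auto simp: bij_betw_def)
  ultimately show thesis
    using that card_image[OF inj_on_subset[OF inj sub(1)]] card_image[OF inj_on_subset[OF inj sub(2)]]
    by simp
qed

section \<open>Matrices constant on the classes of a pair labelling\<close>

lemma vector_space_mscale: "vector_space mscale"
  by unfold_locales (auto simp: mscale_def fun_eq_iff algebra_simps)

global_interpretation mx: vector_space mscale
  by (rule vector_space_mscale)

lemma sum_mx_apply: "(sum f S :: mx) y z = (\<Sum>i\<in>S. f i y z)"
  by (induction S rule: infinite_finite_induct) auto

definition class_functions :: "nat set set \<Rightarrow> (nat set \<Rightarrow> nat set \<Rightarrow> 'c) \<Rightarrow> mx set" where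
  "class_functions X f = {M. (\<forall>y z. M y z \<noteq> 0 \<longrightarrow> y \<in> X \<and> z \<in> X) \<and>
     (\<forall>y\<in>X. \<forall>z\<in>X. \<forall>y'\<in>X. \<forall>z'\<in>X. f y z = f y' z' \<longrightarrow> M y z = M y' z')}"

definition classes :: "nat set set \<Rightarrow> (nat set \<Rightarrow> nat set \<Rightarrow> 'c) \<Rightarrow> 'c set" where
  "classes X f = case_prod f ` (X \<times> X)"

definition class_indicator :: "nat set set \<Rightarrow> (nat set \<Rightarrow> nat set \<Rightarrow> 'c) \<Rightarrow> 'c \<Rightarrow> mx" where
  "class_indicator X f c = (\<lambda>y z. if y \<in> X \<and> z \<in> X \<and> f y z = c then 1 else 0)"

definition class_value :: "nat set set \<Rightarrow> (nat set \<Rightarrow> nat set \<Rightarrow> 'c) \<Rightarrow> mx \<Rightarrow> 'c \<Rightarrow> complex" where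
  "class_value X f M c = case_prod M (SOME p. p \<in> X \<times> X \<and> case_prod f p = c)"

lemma class_functions_support:
  "M \<in> class_functions X f \<Longrightarrow> M y z \<noteq> 0 \<Longrightarrow> y \<in> X \<and> z \<in> X"
  unfolding class_functions_def by blast

lemma class_functions_const:
  "M \<in> class_functions X f \<Longrightarrow> y \<in> X \<Longrightarrow> z \<in> X \<Longrightarrow> y' \<in> X \<Longrightarrow> z' \<in> X \<Longrightarrow>
    f y z = f y' z' \<Longrightarrow> M y z = M y' z'"
  unfolding class_functions_def by blast

lemma finite_classes: "finite X \<Longrightarrow> finite (classes X f)"
  by (simp add: classes_def)

lemma classesI: "y \<in> X \<Longrightarrow> z \<in> X \<Longrightarrow> f y z \<in> classes X f"
  by (force simp: classes_def)

lemma class_value_witness: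
  assumes "c \<in> classes X f"
  obtains y z where "y \<in> X" "z \<in> X" "f y z = c" "class_value X f M c = M y z"
proof -
  have "\<exists>p. p \<in> X \<times> X \<and> case_prod f p = c"
    using assms by (auto simp: classes_def)
  then have "(SOME p. p \<in> X \<times> X \<and> case_prod f p = c) \<in> X \<times> X \<and>
      case_prod f (SOME p. p \<in> X \<times> X \<and> case_prod f p = c) = c"
    by (rule someI_ex)
  then show thesis
    using that by (auto simp: class_value_def split: prod.splits)
qed

lemma class_value_eq:
  assumes "M \<in> class_functions X f" "y \<in> X" "z \<in> X"
  shows "class_value X f M (f y z) = M y z"
proof -
  obtain y' z' where "y' \<in> X" "z' \<in> X" "f y' z' = f y z" "class_value X f M (f y z) = M y' z'"
    by (rule class_value_witness[OF classesI[OF assms(2,3)]])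
  then show ?thesis using class_functions_const[OF assms(1)] assms(2,3) by metis
qed

lemma class_indicator_eq:
  "y \<in> X \<Longrightarrow> z \<in> X \<Longrightarrow> class_indicator X f c y z = (if f y z = c then 1 else 0)"
  by (simp add: class_indicator_def)

lemma class_functions_expansion:
  assumes "finite X" and M: "M \<in> class_functions X f"
  shows "M = (\<Sum>c\<in>classes X f. mscale (class_value X f M c) (class_indicator X f c))"
proof (intro ext)
  fix y z
  show "M y z = (\<Sum>c\<in>classes X f. mscale (class_value X f M c) (class_indicator X f c)) y z"
  proof (cases "y \<in> X \<and> z \<in> X")
    case True
    then have "(\<Sum>c\<in>classes X f. mscale (class_value X f M c) (class_indicator X f c)) y z
        = (\<Sum>c\<in>classes X f. if c = f y z then class_value X f M c else 0)"
      unfolding sum_mx_apply by (intro sum.cong) (auto simp: mscale_def class_indicator_eq)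
    also have "\<dots> = M y z"
      using True M assms(1) by (simp add: finite_classes classesI class_value_eq)
    finally show ?thesis by simp
  next
    case False
    then have "M y z = 0" using class_functions_support[OF M] by blast
    with False show ?thesis
      by (auto simp: sum_mx_apply mscale_def class_indicator_def intro!: sum.neutral)
  qed
qed

lemma inj_on_class_indicator: "inj_on (class_indicator X f) (classes X f)"
proof (rule inj_onI)
  fix c d assume "c \<in> classes X f" "d \<in> classes X f"
    and same: "class_indicator X f c = class_indicator X f d"
  then obtain y z where yz: "y \<in> X" "z \<in> X" "f y z = c" by (auto simp: classes_def)
  then have "class_indicator X f c y z = 1" by (simp add: class_indicator_def)
  then have "class_indicator X f d y z = 1" by (simp only: same)
  with yz show "c = d" by (simp add: class_indicator_def split: if_splits)
qed

lemma independent_class_indicators: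
  assumes "finite X"
  shows "mx.independent (class_indicator X f ` classes X f)"
proof (rule mx.independent_if_scalars_zero)
  show "finite (class_indicator X f ` classes X f)" using assms by (simp add: finite_classes)
next
  fix g I assume sum0: "(\<Sum>J\<in>class_indicator X f ` classes X f. mscale (g J) J) = 0"
    and "I \<in> class_indicator X f ` classes X f"
  then obtain c y z where c: "c \<in> classes X f" "I = class_indicator X f c"
    and yz: "y \<in> X" "z \<in> X" "f y z = c"
    by (auto simp: classes_def)
  have "0 = (\<Sum>J\<in>class_indicator X f ` classes X f. mscale (g J) J) y z" using sum0 by simp
  also have "\<dots> = (\<Sum>d\<in>classes X f. g (class_indicator X f d) * class_indicator X f d y z)"
    by (simp add: sum_mx_apply mscale_def sum.reindex[OF inj_on_class_indicator])
  also have "\<dots> = (\<Sum>d\<in>classes X f. if d = c then g (class_indicator X f d) else 0)"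
    using yz by (intro sum.cong) (auto simp: class_indicator_eq)
  also have "\<dots> = g I"
    using c assms by (simp add: finite_classes)
  finally show "g I = 0" by simp
qed

lemma dim_eq_card_classes:
  assumes "finite X" and "V \<subseteq> class_functions X f"
    and "class_indicator X f ` classes X f \<subseteq> V"
  shows "mx.dim V = card (classes X f)"
proof -
  have "V \<subseteq> mx.span (class_indicator X f ` classes X f)"
  proof
    fix M assume "M \<in> V"
    then have "M = (\<Sum>c\<in>classes X f. mscale (class_value X f M c) (class_indicator X f c))"
      using assms by (intro class_functions_expansion) auto
    also have "\<dots> \<in> mx.span (class_indicator X f ` classes X f)"
      by (intro mx.span_sum mx.span_scale mx.span_base) auto
    finally show "M \<in> mx.span (class_indicator X f ` classes X f)" .
  qed
  then have "mx.dim V = card (class_indicator X f ` classes X f)"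
    using assms(3) independent_class_indicators[OF assms(1)] by (intro mx.dim_unique) auto
  then show ?thesis using card_image[OF inj_on_class_indicator] by simp
qed

lemma class_indicator_mem_if_others_mem:
  assumes X: "finite X" and V: "mx.subspace V" "V \<subseteq> class_functions X f"
    and P: "P \<in> V" and c: "c \<in> classes X f" "class_value X f P c \<noteq> 0"
    and others: "\<And>d. d \<in> classes X f - {c} \<Longrightarrow> class_value X f P d \<noteq> 0 \<Longrightarrow>
      class_indicator X f d \<in> V"
  shows "class_indicator X f c \<in> V"
proof -
  let ?a = "class_value X f P" and ?rest = "\<Sum>d\<in>classes X f - {c}. mscale (class_value X f P d) (class_indicator X f d)"
  have rest: "mscale (?a d) (class_indicator X f d) \<in> V" if "d \<in> classes X f - {c}" for d
    using others[OF that] mx.subspace_0[OF V(1)] mx.subspace_scale[OF V(1)]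
    by (cases "?a d = 0") auto
  have "P = (\<Sum>d\<in>classes X f. mscale (?a d) (class_indicator X f d))"
    using class_functions_expansion[OF X] P V(2) by blast
  also have "\<dots> = mscale (?a c) (class_indicator X f c) + ?rest"
    by (rule sum.remove[OF finite_classes[OF X] c(1)])
  finally have "P - ?rest = mscale (?a c) (class_indicator X f c)"
    by (metis add_diff_cancel)
  then have "class_indicator X f c = mscale (1 / ?a c) (P - ?rest)"
    using c(2) by (simp add: mx.scale_scale)
  also have "\<dots> \<in> V"
    by (rule mx.subspace_scale[OF V(1)], rule mx.subspace_diff[OF V(1) P],
        rule mx.subspace_sum[OF V(1)], rule rest)
  finally show ?thesis .
qed

lemma class_indicator_mem_triangular:
  fixes \<mu> :: "'c \<Rightarrow> nat"
  assumes X: "finite X" and V: "mx.subspace V" "V \<subseteq> class_functions X f"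
    and triangular: "\<And>c. c \<in> C \<Longrightarrow> \<exists>P\<in>V. (\<exists>y\<in>X. \<exists>z\<in>X. f y z = c \<and> P y z \<noteq> 0) \<and>
       (\<forall>y\<in>X. \<forall>z\<in>X. P y z \<noteq> 0 \<longrightarrow> f y z = c \<or> f y z \<in> C \<and> \<mu> c < \<mu> (f y z))"
  shows "c \<in> C \<Longrightarrow> class_indicator X f c \<in> V"
proof (induction "card {d \<in> classes X f. \<mu> c < \<mu> d}" arbitrary: c rule: less_induct)
  case less
  obtain P y0 z0 where P: "P \<in> V" "y0 \<in> X" "z0 \<in> X" "f y0 z0 = c" "P y0 z0 \<noteq> 0"
    and supp: "\<forall>y\<in>X. \<forall>z\<in>X. P y z \<noteq> 0 \<longrightarrow> f y z = c \<or> f y z \<in> C \<and> \<mu> c < \<mu> (f y z)"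
    using triangular[OF less.prems] by blast
  have c: "c \<in> classes X f" using P classesI by metis
  have "class_value X f P c \<noteq> 0" using P V(2) class_value_eq by fastforce
  moreover have "class_indicator X f d \<in> V"
    if d: "d \<in> classes X f - {c}" "class_value X f P d \<noteq> 0" for d
  proof -
    obtain y z where "y \<in> X" "z \<in> X" "f y z = d" "class_value X f P d = P y z"
      using class_value_witness[OF DiffD1[OF d(1)]] .
    then have dC: "d \<in> C" and larger: "\<mu> c < \<mu> d" using supp d by auto
    have "{e \<in> classes X f. \<mu> d < \<mu> e} \<subset> {e \<in> classes X f. \<mu> c < \<mu> e}"
      using larger d by auto
    then have "card {e \<in> classes X f. \<mu> d < \<mu> e} < card {e \<in> classes X f. \<mu> c < \<mu> e}"
      using X by (intro psubset_card_mono) (auto simp: finite_classes)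
    then show ?thesis using less.hyps dC by blast
  qed
  ultimately show ?case
    using class_indicator_mem_if_others_mem[OF X V P(1) c] by blast
qed

section \<open>Levels in the doubled Odd graph\<close>

definition Aset :: "nat \<Rightarrow> nat set" where "Aset m = {1..m}"

definition Bset :: "nat \<Rightarrow> nat set" where "Bset m = {m+1..2*m+1}"

definition Sset :: "nat \<Rightarrow> nat set" where "Sset m = {1..2*m+1}"

abbreviation YA :: "nat \<Rightarrow> nat set \<Rightarrow> nat set" where "YA m y \<equiv> y \<inter> Aset m"

abbreviation YB :: "nat \<Rightarrow> nat set \<Rightarrow> nat set" where "YB m y \<equiv> y \<inter> Bset m"

lemma Sset_eq_Un: "Sset m = Aset m \<union> Bset m"
  by (auto simp: Sset_def Aset_def Bset_def)

lemma Aset_Bset_disjoint: "Aset m \<inter> Bset m = {}"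
  by (auto simp: Aset_def Bset_def)

lemma notin_Bset_if_in_Aset: "x \<in> Aset m \<Longrightarrow> x \<notin> Bset m"
  using Aset_Bset_disjoint by blast

lemma card_Aset [simp]: "card (Aset m) = m"
  and card_Bset [simp]: "card (Bset m) = m + 1"
  and finite_Aset [simp]: "finite (Aset m)"
  and finite_Bset [simp]: "finite (Bset m)"
  and finite_Sset [simp]: "finite (Sset m)"
  by (simp_all add: Aset_def Bset_def Sset_def)

lemma x0_eq_Aset: "x0 m = Aset m"
  by (simp add: x0_def Aset_def)

lemma Xv_iff: "y \<in> Xv m \<longleftrightarrow> y \<subseteq> Sset m \<and> (card y = m \<or> card y = m + 1)"
  by (simp add: Xv_def Sset_def)

lemma finite_Xv [simp]: "finite (Xv m)"
  by (rule finite_subset[of _ "Pow (Sset m)"]) (auto simp: Xv_iff)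

lemma Xv_finite: "y \<in> Xv m \<Longrightarrow> finite y"
  by (meson Xv_iff finite_Sset finite_subset)

lemma Xv_split: "y \<in> Xv m \<Longrightarrow> y = YA m y \<union> YB m y"
  using Sset_eq_Un by (auto simp: Xv_iff)

lemma card_split:
  assumes "y \<subseteq> Sset m"
  shows "card y = card (YA m y) + card (YB m y)"
proof -
  have "y = YA m y \<union> YB m y" using assms Sset_eq_Un by blast
  moreover have "finite y" using assms by (rule finite_subset) simp
  moreover have "YA m y \<inter> YB m y = {}" using Aset_Bset_disjoint by blast
  ultimately show ?thesis by (metis card_Un_disjoint finite_Int)
qed

lemma card_YA_le: "card (YA m y) \<le> m"
  using card_mono[of "Aset m" "YA m y"] by simp

lemma Xv_eqI: "y \<in> Xv m \<Longrightarrow> z \<in> Xv m \<Longrightarrow> YA m y = YA m z \<Longrightarrow> YB m y = YB m z \<Longrightarrow> y = z"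
  by (metis Xv_split)

lemma YA_YB_Un:
  assumes "V \<subseteq> Aset m" "W \<subseteq> Bset m"
  shows "YA m (V \<union> W) = V" "YB m (V \<union> W) = W"
  using assms notin_Bset_if_in_Aset by auto

lemma Xv_of_parts:
  assumes "V \<subseteq> Aset m" "W \<subseteq> Bset m" "card V + card W = m \<or> card V + card W = m + 1"
  shows "V \<union> W \<in> Xv m"
proof -
  have "V \<union> W \<subseteq> Sset m" using assms(1,2) Sset_eq_Un by blast
  then show ?thesis
    using card_split[of "V \<union> W" m] YA_YB_Un[OF assms(1,2)] assms(3) by (simp add: Xv_iff)
qed

lemma x0_in_Xv: "x0 m \<in> Xv m"
  by (auto simp: x0_def Xv_iff Sset_def)

definition level :: "nat \<Rightarrow> nat set \<Rightarrow> nat" where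
  "level m y = (if card y = m then 2 * card (YB m y) else 2 * card (YB m y) - 1)"

lemma level_cases:
  assumes "y \<in> Xv m"
  shows "card y = m \<and> level m y = 2 * card (YB m y) \<and> card (YA m y) + card (YB m y) = m \<or>
    card y = m + 1 \<and> card (YB m y) \<ge> 1 \<and> level m y = 2 * card (YB m y) - 1 \<and>
      card (YA m y) + card (YB m y) = m + 1"
  using assms card_split[of y m] card_YA_le[of y m] by (auto simp: level_def Xv_iff)

lemma level_eq_iff:
  assumes "y \<in> Xv m" "z \<in> Xv m"
  shows "level m y = level m z \<longleftrightarrow> card (YA m y) = card (YA m z) \<and> card (YB m y) = card (YB m z)"
  using level_cases[OF assms(1)] level_cases[OF assms(2)] by auto

lemma level_le_cards:
  assumes "y \<in> Xv m" "z \<in> Xv m" "level m y \<le> level m z"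
  shows "card (YA m z) \<le> card (YA m y) \<and> card (YB m y) \<le> card (YB m z)"
  using level_cases[OF assms(1)] level_cases[OF assms(2)] assms(3) by auto

lemma even_level_iff: "y \<in> Xv m \<Longrightarrow> even (level m y) \<longleftrightarrow> card y = m"
  using level_cases[of y m] by auto

lemma level_le: "y \<in> Xv m \<Longrightarrow> level m y \<le> 2 * m + 1"
  using level_cases[of y m] by auto

lemma level_x0: "level m (x0 m) = 0"
  by (simp add: level_def x0_eq_Aset Aset_Bset_disjoint)

text \<open>Moving one element of \<open>B\<close> (\<open>inB\<close>) or of \<open>A\<close> in or out of a vertex of level \<open>i\<close>
  leads to level \<open>level_step inB i\<close>.\<close>

definition level_step :: "bool \<Rightarrow> nat \<Rightarrow> nat" where
  "level_step inB i = (if even i = inB then i + 1 else i - 1)"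

lemma level_step_cancel: "level_step c (level_step b i) = i \<longleftrightarrow> c = b"
  unfolding level_step_def by (cases b; cases c; cases "even i") (auto elim: oddE)

lemma level_step_level_step [simp]: "level_step b (level_step b i) = i"
  using level_step_cancel by blast

lemma level_step_inj: "level_step b i = level_step c i \<longleftrightarrow> b = c"
  unfolding level_step_def by (cases b; cases c) auto

lemma level_step_le: "level_step b i \<le> Suc i"
  by (auto simp: level_step_def)

lemma level_step_eq_Suc: "level_step b i = Suc i \<longleftrightarrow> even i = b"
  by (auto simp: level_step_def)

lemma level_insert:
  assumes y: "y \<in> Xv m" "card y = m" and e: "e \<in> Sset m" "e \<notin> y"
  shows "insert e y \<in> Xv m \<and> level m (insert e y) = level_step (e \<in> Bset m) (level m y)"
proof -
  have card: "card (insert e y) = m + 1" using y e Xv_finite by simp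
  have "card (YB m (insert e y)) = (if e \<in> Bset m then card (YB m y) + 1 else card (YB m y))"
    using e Xv_finite[OF y(1)] by (simp add: Int_insert_left)
  with card y show ?thesis
    using e by (auto simp: Xv_iff level_def level_step_def)
qed

lemma level_remove:
  assumes y: "y \<in> Xv m" "card y = m + 1" and e: "e \<in> y"
  shows "y - {e} \<in> Xv m \<and> level m (y - {e}) = level_step (e \<in> Bset m) (level m y)"
proof -
  have card: "card (y - {e}) = m" using y e Xv_finite by simp
  have "YB m (y - {e}) = YB m y - {e}" by blast
  then have "card (YB m (y - {e})) = (if e \<in> Bset m then card (YB m y) - 1 else card (YB m y))"
    using e Xv_finite[OF y(1)] by (simp add: card_Diff_singleton_if)
  moreover have "card (YB m y) \<ge> 1" using level_cases[OF y(1)] y(2) by simp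
  ultimately show ?thesis
    using card y by (auto simp: Xv_iff level_def level_step_def)
qed

lemma adj_insert:
  "y \<in> Xv m \<Longrightarrow> insert e y \<in> Xv m \<Longrightarrow> e \<notin> y \<Longrightarrow> adj m y (insert e y) \<and> adj m (insert e y) y"
  by (auto simp: adj_def)

lemma adj_elim:
  assumes "adj m y w"
  obtains e where "e \<in> Sset m" "e \<notin> y" "card y = m" "w = insert e y"
      "level m w = level_step (e \<in> Bset m) (level m y)"
    | e where "e \<in> y" "card y = m + 1" "w = y - {e}"
      "level m w = level_step (e \<in> Bset m) (level m y)"
proof -
  have y: "y \<in> Xv m" and w: "w \<in> Xv m" and sub: "y \<subset> w \<or> w \<subset> y"
    using assms by (auto simp: adj_def)
  have fin: "finite y" "finite w" using y w Xv_finite by auto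
  show thesis
  proof (cases "y \<subset> w")
    case True
    then have "card y = m" "card w = m + 1"
      using y w fin psubset_card_mono[of w y] by (auto simp: Xv_iff)
    then have "card (w - y) = 1" using True fin by (simp add: card_Diff_subset less_imp_le)
    then obtain e where e: "w - y = {e}" by (auto simp: card_Suc_eq)
    then have "w = insert e y" "e \<in> Sset m" "e \<notin> y" using True w by (auto simp: Xv_iff)
    then show thesis using that(1) level_insert y \<open>card y = m\<close> by blast
  next
    case False
    then have psub: "w \<subset> y" using sub by blast
    then have "card y = m + 1" "card w = m"
      using y w fin psubset_card_mono[of y w] by (auto simp: Xv_iff)
    then have "card (y - w) = 1" using psub fin by (simp add: card_Diff_subset less_imp_le)
    then obtain e where e: "y - w = {e}" by (auto simp: card_Suc_eq)
    then have "w = y - {e}" "e \<in> y" using psub by auto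
    then show thesis using that(2) level_remove y \<open>card y = m + 1\<close> by blast
  qed
qed

lemma level_adj_le: "adj m y w \<Longrightarrow> level m w \<le> Suc (level m y)"
  by (elim adj_elim) (simp_all add: level_step_le)

lemma adj_level_Suc:
  assumes "adj m y w" "level m w = Suc (level m y)"
  shows "YA m w \<subseteq> YA m y \<and> YB m y \<subseteq> YB m w"
proof -
  have y: "y \<in> Xv m" using assms(1) by (simp add: adj_def)
  from assms(1) show ?thesis
  proof (cases rule: adj_elim)
    case (1 e)
    then have "e \<in> Bset m" using assms(2) even_level_iff[OF y] by (simp add: level_step_eq_Suc)
    then show ?thesis using 1 Aset_Bset_disjoint by auto
  next
    case (2 e)
    then have "e \<notin> Bset m" using assms(2) even_level_iff[OF y] by (simp add: level_step_eq_Suc)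
    then show ?thesis using 2 by auto
  qed
qed

lemma walk_level_le: "walk m k x y \<Longrightarrow> level m y \<le> level m x + k"
proof (induction rule: walk.induct)
  case (walk_step x z k y)
  then show ?case using level_adj_le[OF walk_step(1)] by simp
qed simp

lemma eq_if_level_eq_between:
  assumes y: "y \<in> Xv m" and z: "z \<in> Xv m" and between: "YA m z \<subseteq> YA m y" "YB m y \<subseteq> YB m z"
    and "level m y = level m z"
  shows "y = z"
proof -
  have cards: "card (YA m y) = card (YA m z)" "card (YB m y) = card (YB m z)"
    using level_eq_iff[OF y z] assms(5) by blast+
  have "finite (YA m y)" "finite (YB m z)" using Xv_finite y z by auto
  then have "YA m z = YA m y" "YB m y = YB m z"
    using card_subset_eq between cards by metis+
  then show ?thesis using Xv_eqI[OF y z] by simp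
qed

lemma exists_adj_towards:
  assumes y: "y \<in> Xv m" and z: "z \<in> Xv m" and between: "YA m z \<subseteq> YA m y" "YB m y \<subseteq> YB m z"
    and lt: "level m y < level m z"
  shows "\<exists>w. adj m y w \<and> level m w = Suc (level m y) \<and> YA m z \<subseteq> YA m w \<and> YB m w \<subseteq> YB m z"
proof (cases "card y = m")
  case True
  then have "card (YB m y) < card (YB m z)"
    using level_cases[OF y] level_cases[OF z] lt by auto
  then have "\<not> YB m z \<subseteq> YB m y"
    using card_mono[of "YB m y" "YB m z"] Xv_finite[OF y] by auto
  then obtain b where b: "b \<in> YB m z" "b \<notin> y" by blast
  have bS: "b \<in> Sset m" using b(1) Sset_eq_Un by blast
  note ins = level_insert[OF y True bS b(2)]
  have "level m (insert b y) = Suc (level m y)"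
    using ins b even_level_iff[OF y] True by (simp add: level_step_def)
  then show ?thesis
    using ins adj_insert[OF y _ b(2)] between b by (intro exI[of _ "insert b y"]) auto
next
  case False
  then have card: "card y = m + 1" using y by (simp add: Xv_iff)
  have "card (YB m y) \<le> card (YB m z)"
    using card_mono[of "YB m z" "YB m y"] Xv_finite[OF z] between by auto
  then have "card (YA m z) < card (YA m y)"
    using level_cases[OF y] level_cases[OF z] lt card by auto
  then have "\<not> YA m y \<subseteq> YA m z"
    using card_mono[of "YA m z" "YA m y"] Xv_finite[OF z] by auto
  then obtain a where a: "a \<in> YA m y" "a \<notin> z" by blast
  note rem = level_remove[OF y card, of a]
  have "a \<notin> Bset m" using a Aset_Bset_disjoint by blast
  then have "level m (y - {a}) = Suc (level m y)"
    using rem a even_level_iff[OF y] card by (simp add: level_step_def)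
  moreover have "adj m y (y - {a})"
    using adj_insert[of "y - {a}" m a] rem a y by (simp add: insert_absorb)
  ultimately show ?thesis
    using between a by (intro exI[of _ "y - {a}"]) auto
qed

lemma walk_between:
  assumes "y \<in> Xv m" "z \<in> Xv m" "YA m z \<subseteq> YA m y" "YB m y \<subseteq> YB m z" "level m y \<le> level m z"
  shows "walk m (level m z - level m y) y z"
  using assms
proof (induction "level m z - level m y" arbitrary: y)
  case 0
  then have "y = z" using eq_if_level_eq_between by simp
  then show ?case using 0 walk_nil by simp
next
  case (Suc d)
  have "level m y < level m z" using Suc.hyps(2) by simp
  then obtain w where w: "adj m y w" "level m w = Suc (level m y)" "YA m z \<subseteq> YA m w" "YB m w \<subseteq> YB m z"
    using exists_adj_towards[OF Suc.prems(1-4)] by blast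
  have d: "d = level m z - level m w" using Suc.hyps(2) w(2) by simp
  have "w \<in> Xv m" using w(1) by (simp add: adj_def)
  then have "walk m d w z"
    using Suc.hyps(1)[OF d] Suc.prems(2) w(2-4) Suc.hyps(2) d by simp
  then show ?case using walk_step[OF w(1)] Suc.hyps(2) by metis
qed

lemma gdist_x0: "y \<in> Xv m \<Longrightarrow> gdist m (x0 m) y = level m y"
  unfolding gdist_def
proof (rule Least_equality)
  assume y: "y \<in> Xv m"
  have "walk m (level m y - level m (x0 m)) (x0 m) y"
    by (rule walk_between[OF x0_in_Xv y]) (use Aset_Bset_disjoint level_x0 in \<open>auto simp: x0_eq_Aset\<close>)
  then show "walk m (level m y) (x0 m) y" by (simp add: level_x0)
next
  fix k assume "walk m k (x0 m) y"
  then show "level m y \<le> k" using walk_level_le level_x0 by fastforce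
qed

lemma Estar_level: "Estar m i = (\<lambda>x y. if x \<in> Xv m \<and> x = y \<and> level m x = i then 1 else 0)"
  by (auto simp: Estar_def gdist_x0 fun_eq_iff)

section \<open>The stabilizer of \<open>x0\<close> and orbit types\<close>

definition stab :: "nat \<Rightarrow> (nat \<Rightarrow> nat) set" where
  "stab m = {\<sigma>. bij_betw \<sigma> (Sset m) (Sset m) \<and> \<sigma> ` Aset m = Aset m}"

lemma stab_inj: "\<sigma> \<in> stab m \<Longrightarrow> inj_on \<sigma> (Sset m)"
  by (simp add: stab_def bij_betw_def)

lemma stab_Sset: "\<sigma> \<in> stab m \<Longrightarrow> \<sigma> ` Sset m = Sset m"
  by (simp add: stab_def bij_betw_def)

lemma stab_Bset: "\<sigma> \<in> stab m \<Longrightarrow> \<sigma> ` Bset m = Bset m"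
proof -
  assume \<sigma>: "\<sigma> \<in> stab m"
  have "Bset m = Sset m - Aset m" using Sset_eq_Un Aset_Bset_disjoint by blast
  then show ?thesis
    using inj_on_image_set_diff[OF stab_inj[OF \<sigma>], of "Sset m" "Aset m"] \<sigma>
    by (simp add: stab_Sset) (simp add: stab_def Sset_eq_Un)
qed

lemma stab_inv:
  assumes \<sigma>: "\<sigma> \<in> stab m"
  shows "inv_into (Sset m) \<sigma> \<in> stab m"
proof -
  have "inv_into (Sset m) \<sigma> ` Aset m = inv_into (Sset m) \<sigma> ` \<sigma> ` Aset m"
    using \<sigma> by (simp add: stab_def)
  also have "\<dots> = Aset m"
    using stab_inj[OF \<sigma>] Sset_eq_Un by (intro inv_into_image_cancel) auto
  finally show ?thesis
    using \<sigma> bij_betw_inv_into by (auto simp: stab_def)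
qed

lemma stab_image_Int: "\<sigma> \<in> stab m \<Longrightarrow> y \<subseteq> Sset m \<Longrightarrow> z \<subseteq> Sset m \<Longrightarrow> \<sigma> ` (y \<inter> z) = \<sigma> ` y \<inter> \<sigma> ` z"
  by (rule inj_on_image_Int[OF stab_inj])

lemma stab_image_eq_iff: "\<sigma> \<in> stab m \<Longrightarrow> y \<subseteq> Sset m \<Longrightarrow> z \<subseteq> Sset m \<Longrightarrow> \<sigma> ` y = \<sigma> ` z \<longleftrightarrow> y = z"
  by (rule inj_on_image_eq_iff[OF stab_inj])

lemma stab_image_psubset_iff:
  assumes "\<sigma> \<in> stab m" "y \<subseteq> Sset m" "z \<subseteq> Sset m"
  shows "\<sigma> ` y \<subset> \<sigma> ` z \<longleftrightarrow> y \<subset> z"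
proof -
  have "\<sigma> ` y \<subseteq> \<sigma> ` z \<longleftrightarrow> \<sigma> ` (y \<inter> z) = \<sigma> ` y"
    using stab_image_Int[OF assms] by blast
  also have "\<dots> \<longleftrightarrow> y \<subseteq> z"
    using stab_image_eq_iff[OF assms(1), of "y \<inter> z" y] assms(2) by blast
  finally show ?thesis using stab_image_eq_iff[OF assms] by blast
qed

lemma stab_card: "\<sigma> \<in> stab m \<Longrightarrow> y \<subseteq> Sset m \<Longrightarrow> card (\<sigma> ` y) = card y"
  by (rule card_image) (rule inj_on_subset[OF stab_inj])

lemma stab_YB: "\<sigma> \<in> stab m \<Longrightarrow> y \<subseteq> Sset m \<Longrightarrow> YB m (\<sigma> ` y) = \<sigma> ` YB m y"
  using stab_image_Int[of \<sigma> m y "Bset m"] Sset_eq_Un by (simp add: stab_Bset)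

lemma stab_Xv: "\<sigma> \<in> stab m \<Longrightarrow> y \<in> Xv m \<Longrightarrow> \<sigma> ` y \<in> Xv m"
  using image_mono[of y "Sset m" \<sigma>] by (simp add: Xv_iff stab_Sset stab_card)

lemma stab_level: "\<sigma> \<in> stab m \<Longrightarrow> y \<in> Xv m \<Longrightarrow> level m (\<sigma> ` y) = level m y"
  using stab_card[of \<sigma> m "YB m y"] stab_card[of \<sigma> m y]
  by (simp add: level_def stab_YB Xv_iff le_infI1)

lemma stab_bij_Xv: "\<sigma> \<in> stab m \<Longrightarrow> bij_betw ((`) \<sigma>) (Xv m) (Xv m)"
proof -
  assume \<sigma>: "\<sigma> \<in> stab m"
  define \<tau> where "\<tau> = inv_into (Sset m) \<sigma>"
  have "inj_on ((`) \<sigma>) (Xv m)"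
    using stab_image_eq_iff[OF \<sigma>] by (auto simp: inj_on_def Xv_iff)
  moreover have "Xv m \<subseteq> (`) \<sigma> ` Xv m"
  proof
    fix y assume y: "y \<in> Xv m"
    then have "y = \<sigma> ` (\<tau> ` y)"
      using stab_Sset[OF \<sigma>] by (simp add: \<tau>_def image_inv_into_cancel Xv_iff)
    then show "y \<in> (`) \<sigma> ` Xv m"
      using stab_Xv[OF stab_inv[OF \<sigma>] y] by (simp add: \<tau>_def)
  qed
  ultimately show ?thesis
    using stab_Xv[OF \<sigma>] by (auto simp: bij_betw_def)
qed

lemma stab_adj: "\<sigma> \<in> stab m \<Longrightarrow> y \<in> Xv m \<Longrightarrow> z \<in> Xv m \<Longrightarrow> adj m (\<sigma> ` y) (\<sigma> ` z) \<longleftrightarrow> adj m y z"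
  using stab_image_psubset_iff[of \<sigma> m y z] stab_image_psubset_iff[of \<sigma> m z y] stab_Xv[of \<sigma> m]
  by (simp add: adj_def Xv_iff)

lemma Talg_invariant:
  assumes "M \<in> Talg m" "\<sigma> \<in> stab m" 
  shows "y \<in> Xv m \<Longrightarrow> z \<in> Xv m \<Longrightarrow> M (\<sigma> ` y) (\<sigma> ` z) = M y z"
  using assms(1)
proof (induction arbitrary: y z rule: Talg.induct)
  case T_A
  then show ?case using stab_adj[OF assms(2)] by (simp add: A1_def)
next
  case (T_E i)
  then show ?case
    using stab_image_eq_iff[OF assms(2)] stab_Xv[OF assms(2)] stab_level[OF assms(2)]
    by (simp add: Estar_level Xv_iff)
next
  case T_I
  then show ?case
    using stab_image_eq_iff[OF assms(2)] stab_Xv[OF assms(2)] by (simp add: Imx_def Xv_iff)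
next
  case (T_mult M N)
  have "mmult m M N (\<sigma> ` y) (\<sigma> ` z) = (\<Sum>w\<in>Xv m. M (\<sigma> ` y) (\<sigma> ` w) * N (\<sigma> ` w) (\<sigma> ` z))"
    unfolding mmult_def
    by (rule sum.reindex_bij_betw[OF stab_bij_Xv[OF assms(2)], symmetric])
  also have "\<dots> = mmult m M N y z"
    using T_mult by (simp add: mmult_def)
  finally show ?case .
qed (simp_all add: mscale_def)

definition orbit_type :: "nat \<Rightarrow> nat set \<Rightarrow> nat set \<Rightarrow> nat \<times> nat \<times> nat \<times> nat \<times> nat \<times> nat" where
  "orbit_type m y z = (card (YA m y), card (YB m y), card (YA m z), card (YB m z),
     card (y \<inter> z \<inter> Aset m), card (y \<inter> z \<inter> Bset m))"

lemma orbit_type_eq_imp_stab: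
  assumes y: "y \<in> Xv m" and z: "z \<in> Xv m" and y': "y' \<in> Xv m" and z': "z' \<in> Xv m"
    and eq: "orbit_type m y z = orbit_type m y' z'"
  shows "\<exists>\<sigma>\<in>stab m. \<sigma> ` y = y' \<and> \<sigma> ` z = z'"
proof -
  define \<kappa> where "\<kappa> x = (x \<in> Bset m, x \<in> y, x \<in> z)" for x
  define \<kappa>' where "\<kappa>' x = (x \<in> Bset m, x \<in> y', x \<in> z')" for x
  have block: "{x\<in>Sset m. (x \<in> Bset m, x \<in> u, x \<in> v) = (c, a, b)} =
      {x \<in> (if c then Bset m else Aset m). (x \<in> u) = a \<and> (x \<in> v) = b}" for u v a b c
    using Sset_eq_Un Aset_Bset_disjoint by auto
  have fibres: "card {x\<in>Sset m. \<kappa> x = i} = card {x\<in>Sset m. \<kappa>' x = i}" for i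
  proof -
    obtain c a b where i: "i = (c, a, b)" by (cases i) auto
    show ?thesis
      using eq card_venn_region[of "Aset m" y a z b] card_venn_region[of "Aset m" y' a z' b]
        card_venn_region[of "Bset m" y a z b] card_venn_region[of "Bset m" y' a z' b]
      unfolding \<kappa>_def \<kappa>'_def i block by (simp add: orbit_type_def Int_ac)
  qed
  then obtain h where h: "bij_betw h (Sset m) (Sset m)" "\<forall>x\<in>Sset m. \<kappa>' (h x) = \<kappa> x"
    using exists_bij_betw_relabel[of "Sset m" \<kappa> \<kappa>', OF finite_Sset fibres] by blast
  note image = bij_betw_relabel_image[OF h]
  have sets: "{x\<in>Sset m. \<not> fst (\<kappa> x)} = Aset m" "{x\<in>Sset m. \<not> fst (\<kappa>' x)} = Aset m"
    "{x\<in>Sset m. fst (snd (\<kappa> x))} = y" "{x\<in>Sset m. fst (snd (\<kappa>' x))} = y'"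
    "{x\<in>Sset m. snd (snd (\<kappa> x))} = z" "{x\<in>Sset m. snd (snd (\<kappa>' x))} = z'"
    using y y' z z' Sset_eq_Un Aset_Bset_disjoint by (auto simp: \<kappa>_def \<kappa>'_def Xv_iff)
  have "h ` Aset m = Aset m" "h ` y = y'" "h ` z = z'"
    using image[of "\<lambda>i. \<not> fst i"] image[of "\<lambda>i. fst (snd i)"] image[of "\<lambda>i. snd (snd i)"]
    by (simp_all only: sets)
  then show ?thesis using h(1) by (auto simp: stab_def)
qed

lemma Talg_support: "M \<in> Talg m \<Longrightarrow> y \<notin> Xv m \<or> z \<notin> Xv m \<Longrightarrow> M y z = 0"
proof (induction arbitrary: y z rule: Talg.induct)
  case (T_mult M N)
  then show ?case by (auto simp: mmult_def)
qed (auto simp: A1_def adj_def Estar_def Imx_def mscale_def)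

lemma Talg_subset_class_functions: "Talg m \<subseteq> class_functions (Xv m) (orbit_type m)"
proof
  fix M assume M: "M \<in> Talg m"
  have "M y z \<noteq> 0 \<longrightarrow> y \<in> Xv m \<and> z \<in> Xv m" for y z
    using Talg_support[OF M] by blast
  moreover have "M y z = M y' z'"
    if "y \<in> Xv m" "z \<in> Xv m" "y' \<in> Xv m" "z' \<in> Xv m" "orbit_type m y z = orbit_type m y' z'"
    for y z y' z'
    using orbit_type_eq_imp_stab[OF that] Talg_invariant[OF M] that(1,2) by metis
  ultimately show "M \<in> class_functions (Xv m) (orbit_type m)"
    unfolding class_functions_def by blast
qed

section \<open>Level-respecting walks inside the algebra\<close>

lemma subspace_Talg: "mx.subspace (Talg m)"
proof (rule mx.subspaceI)
  have "mscale 0 (Imx m) \<in> Talg m" by (rule Talg.T_scale[OF Talg.T_I])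
  then show "0 \<in> Talg m" by (simp add: mx.scale_zero_left)
qed (auto intro: Talg.intros)

lemma Estar_in_Talg: "Estar m i \<in> Talg m"
proof (cases "i \<le> 2 * m + 1")
  case False
  then have "Estar m i = 0" using level_le by (force simp: Estar_level fun_eq_iff)
  then show ?thesis using mx.subspace_0[OF subspace_Talg] by simp
qed (rule Talg.T_E)

definition nat_valued :: "mx \<Rightarrow> bool" where
  "nat_valued M \<longleftrightarrow> (\<forall>x y. \<exists>n::nat. M x y = of_nat n)"

lemma nat_valued_mmult:
  assumes "nat_valued M" "nat_valued N"
  shows "nat_valued (mmult m M N)"
    and "mmult m M N x z \<noteq> 0 \<longleftrightarrow> (\<exists>y\<in>Xv m. M x y \<noteq> 0 \<and> N y z \<noteq> 0)"
proof -
  obtain f where f: "\<And>x y. M x y = of_nat (f x y)" using assms(1) unfolding nat_valued_def by metis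
  obtain g where g: "\<And>x y. N x y = of_nat (g x y)" using assms(2) unfolding nat_valued_def by metis
  have prod: "mmult m M N x z = of_nat (\<Sum>y\<in>Xv m. f x y * g y z)" for x z
    by (simp add: mmult_def f g)
  show "nat_valued (mmult m M N)" unfolding nat_valued_def using prod by blast
  show "mmult m M N x z \<noteq> 0 \<longleftrightarrow> (\<exists>y\<in>Xv m. M x y \<noteq> 0 \<and> N y z \<noteq> 0)"
    unfolding prod f g of_nat_eq_0_iff by simp
qed

lemma nat_valued_generators [simp]: "nat_valued (A1 m)" "nat_valued (Estar m i)" "nat_valued (Imx m)"
  unfolding nat_valued_def A1_def Estar_def Imx_def by (metis of_nat_0 of_nat_1)+

lemmas mmult_nonzero_iff = nat_valued_mmult(2)

lemma generators_nonzero_iff: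
  "A1 m y z \<noteq> 0 \<longleftrightarrow> adj m y z"
  "Estar m i y z \<noteq> 0 \<longleftrightarrow> y \<in> Xv m \<and> y = z \<and> level m y = i"
  "Imx m y z \<noteq> 0 \<longleftrightarrow> y \<in> Xv m \<and> y = z"
  by (auto simp: A1_def Estar_level Imx_def)

fun mpow :: "nat \<Rightarrow> mx \<Rightarrow> nat \<Rightarrow> mx" where
  "mpow m M 0 = Imx m"
| "mpow m M (Suc k) = mmult m M (mpow m M k)"

lemma mpow_in_Talg: "M \<in> Talg m \<Longrightarrow> mpow m M k \<in> Talg m"
  by (induction k) (auto intro: Talg.T_I Talg.T_mult)

lemma nat_valued_mpow: "nat_valued M \<Longrightarrow> nat_valued (mpow m M k)"
  by (induction k) (auto simp: nat_valued_mmult)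

definition block :: "nat \<Rightarrow> bool \<Rightarrow> nat set" where
  "block m inB = (if inB then Bset m else Aset m)"

lemma block_simps [simp]: "block m False = Aset m" "block m True = Bset m"
  by (simp_all add: block_def)

lemma block_iff: "e \<in> Sset m \<Longrightarrow> e \<in> block m b \<longleftrightarrow> (e \<in> Bset m) = b"
  using Sset_eq_Un Aset_Bset_disjoint by (auto simp: block_def)

lemma block_subset: "block m b \<subseteq> Sset m"
  using Sset_eq_Un by (auto simp: block_def)

lemma card_block_split: "y \<subseteq> Sset m \<Longrightarrow> card y = card (y \<inter> block m b) + card (y \<inter> block m (\<not> b))"
  using card_split by (auto simp: block_def)

lemma Xv_block_split: "y \<in> Xv m \<Longrightarrow> y = y \<inter> block m b \<union> y \<inter> block m (\<not> b)"
  using Xv_split[of y m] by (cases b) (auto simp: block_def)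

lemma card_block_eq:
  assumes "y \<in> Xv m" "y' \<in> Xv m" "card y = card y'" "y \<inter> block m (\<not> b) = y' \<inter> block m (\<not> b)"
  shows "card (y \<inter> block m b) = card (y' \<inter> block m b)"
  using assms card_block_split[of y m b] card_block_split[of y' m b] by (simp add: Xv_iff)

lemma Xv_eq_if_block_subset:
  assumes y: "y \<in> Xv m" and y': "y' \<in> Xv m" and "card y = card y'"
    and other: "y \<inter> block m (\<not> b) = y' \<inter> block m (\<not> b)" and sub: "y \<inter> block m b \<subseteq> y' \<inter> block m b"
  shows "y = y'"
proof -
  have "y \<inter> block m b = y' \<inter> block m b"
    using card_subset_eq[OF _ sub] card_block_eq[OF assms(1-4)] Xv_finite[OF y'] by simp
  then show ?thesis using Xv_block_split[OF y, of b] Xv_block_split[OF y', of b] other by simp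
qed

lemma adj_keeps_other_block:
  assumes "adj m y w" "level m w = level_step b (level m y)"
  shows "y \<inter> block m (\<not> b) = w \<inter> block m (\<not> b)"
  using assms(1)
proof (cases rule: adj_elim)
  case (1 e)
  have "(e \<in> Bset m) = b" using 1(5) assms(2) level_step_inj by metis
  then have "e \<in> block m b" using block_iff[OF 1(1)] by simp
  then show ?thesis using 1 notin_Bset_if_in_Aset by (auto simp: block_def)
next
  case (2 e)
  have "e \<in> Sset m" using 2(1) assms(1) by (auto simp: adj_def Xv_iff)
  moreover have "(e \<in> Bset m) = b" using 2(4) assms(2) level_step_inj by metis
  ultimately have "e \<in> block m b" using block_iff by blast
  then show ?thesis using 2 notin_Bset_if_in_Aset by (auto simp: block_def)
qed

lemma card_diff_le_1_if_adj_adj: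
  assumes "adj m y w" "adj m w z"
  shows "card (y - z) \<le> 1"
proof -
  have "\<exists>e. y - z \<subseteq> {e}"
  proof (cases rule: adj_elim[OF assms(1)])
    case (1 e)
    then have "card w = m + 1" using assms(1) Xv_finite[of y m] unfolding adj_def by simp
    with assms(2) show ?thesis by (cases rule: adj_elim) (use 1 in auto)
  next
    case (2 e)
    then have "card w = m" using assms(1) Xv_finite[of y m] unfolding adj_def by simp
    with assms(2) show ?thesis by (cases rule: adj_elim) (use 2 in auto)
  qed
  then obtain e where "y - z \<subseteq> {e}" by blast
  then show ?thesis using card_mono[of "{e}" "y - z"] by simp
qed

text \<open>\<open>E\<^sup>*\<^sub>i A E\<^sup>*\<^sub>k A E\<^sup>*\<^sub>i\<close> with \<open>k\<close> the level reached by moving one element of the block \<open>inB\<close>: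
  its support consists of pairs of level \<open>i\<close> that differ by an exchange inside that block.\<close>

definition swap_walk :: "nat \<Rightarrow> bool \<Rightarrow> nat \<Rightarrow> mx" where
  "swap_walk m inB i = mmult m (mmult m (mmult m (mmult m (Estar m i) (A1 m))
     (Estar m (level_step inB i))) (A1 m)) (Estar m i)"

lemma swap_walk_in_Talg: "swap_walk m b i \<in> Talg m"
  unfolding swap_walk_def by (intro Talg.T_mult Estar_in_Talg Talg.T_A)

lemma nat_valued_swap_walk: "nat_valued (swap_walk m b i)"
  by (simp add: swap_walk_def nat_valued_mmult)

lemma swap_walk_nonzero_iff:
  "swap_walk m b i y z \<noteq> 0 \<longleftrightarrow> y \<in> Xv m \<and> level m y = i \<and> z \<in> Xv m \<and> level m z = i \<and>
     (\<exists>w. adj m y w \<and> level m w = level_step b i \<and> adj m w z)"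
  by (auto simp: swap_walk_def mmult_nonzero_iff nat_valued_mmult generators_nonzero_iff adj_def)

lemma swap_walk_nonzero_dest:
  assumes "swap_walk m b i y z \<noteq> 0"
  shows "y \<in> Xv m \<and> z \<in> Xv m \<and> level m y = i \<and> level m z = i \<and>
    y \<inter> block m (\<not> b) = z \<inter> block m (\<not> b) \<and> card (y - z) \<le> 1"
proof -
  obtain w where w: "y \<in> Xv m" "level m y = i" "z \<in> Xv m" "level m z = i"
    "adj m y w" "level m w = level_step b i" "adj m w z"
    using assms swap_walk_nonzero_iff by blast
  have "level m z = level_step b (level m w)"
    using w by simp
  then show ?thesis
    using w adj_keeps_other_block[OF w(5)] adj_keeps_other_block[OF w(7)]
      card_diff_le_1_if_adj_adj[OF w(5,7)] by simp
qed

lemma swap_walk_nonzero_intro: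
  assumes y: "y \<in> Xv m" and a: "a \<in> y \<inter> block m b" and a': "a' \<in> block m b" "a' \<notin> y"
  defines "z \<equiv> insert a' (y - {a})"
  shows "swap_walk m b (level m y) y z \<noteq> 0 \<and> z \<in> Xv m \<and> level m z = level m y"
proof -
  have S: "a \<in> Sset m" "a' \<in> Sset m" using a a' block_subset by blast+
  have ab: "(a \<in> Bset m) = b" "(a' \<in> Bset m) = b" using S a a' block_iff by blast+
  have "a \<noteq> a'" using a a' by blast
  have "\<exists>w. adj m y w \<and> level m w = level_step b (level m y) \<and> adj m w z \<and>
      z \<in> Xv m \<and> level m z = level m y"
  proof (cases "card y = m")
    case True
    define w where "w = insert a' y"
    note w = level_insert[OF y True S(2) a'(2), folded w_def]
    have "card w = m + 1" using True a'(2) Xv_finite[OF y] by (simp add: w_def)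
    moreover have "z = w - {a}" "a \<in> w" using a \<open>a \<noteq> a'\<close> by (auto simp: z_def w_def)
    ultimately have z: "z \<in> Xv m" "level m z = level m y"
      using level_remove[of w m a] w ab level_step_cancel by auto
    have "adj m y w" "adj m w z"
      using adj_insert[OF y, of a'] adj_insert[OF z(1), of a] w a'(2) \<open>z = w - {a}\<close> \<open>a \<in> w\<close>
      by (auto simp: w_def insert_absorb)
    then show ?thesis using w z ab by auto
  next
    case False
    then have card: "card y = m + 1" using y by (simp add: Xv_iff)
    define w where "w = y - {a}"
    note w = level_remove[OF y card, of a, folded w_def]
    have "card w = m" using card a Xv_finite[OF y] by (simp add: w_def)
    moreover have "z = insert a' w" "a' \<notin> w" using a' by (auto simp: z_def w_def)
    ultimately have z: "z \<in> Xv m" "level m z = level m y"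
      using level_insert[of w m a'] w a ab S level_step_cancel by auto
    have "adj m y w" "adj m w z"
      using adj_insert[OF w[THEN conjunct1], of a] adj_insert[OF w[THEN conjunct1], of a'] a z y
        \<open>z = insert a' w\<close> \<open>a' \<notin> w\<close> by (auto simp: w_def insert_absorb)
    then show ?thesis using w z ab a by auto
  qed
  then show ?thesis using y by (auto simp: swap_walk_nonzero_iff)
qed

lemma swap_power_nonzero_dest:
  "mpow m (swap_walk m b i) k y z \<noteq> 0 \<Longrightarrow> y \<in> Xv m \<and> z \<in> Xv m \<and> level m z = level m y \<and>
     y \<inter> block m (\<not> b) = z \<inter> block m (\<not> b) \<and> card (y \<inter> block m b - z \<inter> block m b) \<le> k"
proof (induction k arbitrary: y)
  case 0
  then show ?case by (auto simp: generators_nonzero_iff)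
next
  case (Suc k)
  then obtain w where "w \<in> Xv m" "swap_walk m b i y w \<noteq> 0" "mpow m (swap_walk m b i) k w z \<noteq> 0"
    by (auto simp: mmult_nonzero_iff nat_valued_swap_walk nat_valued_mpow)
  note step = swap_walk_nonzero_dest[OF this(2)] and rest = Suc.IH[OF this(3)]
  have fin: "finite y" "finite w" using step rest Xv_finite by blast+
  have "card (y \<inter> block m b - w \<inter> block m b) \<le> card (y - w)"
    using fin by (intro card_mono) auto
  then have "card (y \<inter> block m b - z \<inter> block m b) \<le> 1 + k"
    using card_Diff_triangle[of "y \<inter> block m b" "w \<inter> block m b" "z \<inter> block m b"] fin step rest
    by simp
  then show ?case using step rest by simp
qed

lemma swap_power_nonzero_intro:
  "y \<in> Xv m \<Longrightarrow> y' \<in> Xv m \<Longrightarrow> card y = card y' \<Longrightarrow> y \<inter> block m (\<not> b) = y' \<inter> block m (\<not> b) \<Longrightarrow>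
    card (y \<inter> block m b - y' \<inter> block m b) = k \<Longrightarrow> mpow m (swap_walk m b (level m y)) k y y' \<noteq> 0"
proof (induction k arbitrary: y)
  case 0
  then have "y \<inter> block m b \<subseteq> y' \<inter> block m b" using Xv_finite by auto
  then have "y = y'" using Xv_eq_if_block_subset 0 by blast
  then show ?case using 0 by (simp add: generators_nonzero_iff)
next
  case (Suc k)
  have fin: "finite (y \<inter> block m b)" "finite (y' \<inter> block m b)" using Suc Xv_finite by blast+
  have cards: "card (y \<inter> block m b) = card (y' \<inter> block m b)"
    using card_block_eq Suc.prems by blast
  obtain a where a: "a \<in> y \<inter> block m b - y' \<inter> block m b"
    using Suc.prems(5) by (metis card.empty ex_in_conv nat.distinct(1))
  have "card (y' \<inter> block m b - y \<inter> block m b) = Suc k"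
    using Suc.prems(5) cards fin by (simp add: card_Diff_subset_Int Int_commute)
  then obtain a' where a': "a' \<in> y' \<inter> block m b - y \<inter> block m b"
    by (metis card.empty ex_in_conv nat.distinct(1))
  define z where "z = insert a' (y - {a})"
  have step: "swap_walk m b (level m y) y z \<noteq> 0" "z \<in> Xv m" "level m z = level m y"
    using swap_walk_nonzero_intro[OF Suc.prems(1), of a b a'] a a' by (auto simp: z_def)
  have "z \<inter> block m b - y' \<inter> block m b = (y \<inter> block m b - y' \<inter> block m b) - {a}"
    "z \<inter> block m (\<not> b) = y \<inter> block m (\<not> b)"
    using a a' notin_Bset_if_in_Aset by (auto simp: z_def block_def)
  moreover have "card z = card y" using step Suc.prems(1) even_level_iff by (metis Xv_iff)
  moreover have "card (y \<inter> block m b - y' \<inter> block m b - {a}) = k"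
    using Suc.prems(5) card_Diff_singleton[OF a] by simp
  ultimately have "mpow m (swap_walk m b (level m y)) k z y' \<noteq> 0"
    using Suc.IH[OF step(2) Suc.prems(2)] Suc.prems(3,4) step(3) by simp
  then show ?case
    using step Suc.prems(2) by (auto simp: mmult_nonzero_iff nat_valued_swap_walk nat_valued_mpow)
qed

fun raise :: "nat \<Rightarrow> nat \<Rightarrow> nat \<Rightarrow> mx" where
  "raise m i 0 = Estar m i"
| "raise m i (Suc d) = mmult m (mmult m (Estar m i) (A1 m)) (raise m (Suc i) d)"

lemma raise_in_Talg: "raise m i d \<in> Talg m"
  by (induction d arbitrary: i) (auto intro: Talg.T_mult Estar_in_Talg Talg.T_A)

lemma nat_valued_raise: "nat_valued (raise m i d)"
  by (induction d arbitrary: i) (auto simp: nat_valued_mmult)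

lemma raise_nonzero_dest:
  "raise m i d y z \<noteq> 0 \<Longrightarrow> y \<in> Xv m \<and> z \<in> Xv m \<and> level m y = i \<and> level m z = i + d \<and>
     YA m z \<subseteq> YA m y \<and> YB m y \<subseteq> YB m z"
proof (induction d arbitrary: i y)
  case 0
  then show ?case by (auto simp: generators_nonzero_iff)
next
  case (Suc d)
  then obtain w where w: "y \<in> Xv m" "level m y = i" "adj m y w" "raise m (Suc i) d w z \<noteq> 0"
    by (auto simp: mmult_nonzero_iff nat_valued_mmult nat_valued_raise generators_nonzero_iff)
  then show ?case using Suc.IH[OF w(4)] adj_level_Suc[OF w(3)] by auto
qed

lemma raise_nonzero_intro:
  "y \<in> Xv m \<Longrightarrow> z \<in> Xv m \<Longrightarrow> YA m z \<subseteq> YA m y \<Longrightarrow> YB m y \<subseteq> YB m z \<Longrightarrow>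
    level m y = i \<Longrightarrow> level m z = i + d \<Longrightarrow> raise m i d y z \<noteq> 0"
proof (induction d arbitrary: i y)
  case 0
  then have "y = z" using eq_if_level_eq_between by simp
  then show ?case using 0 by (simp add: generators_nonzero_iff)
next
  case (Suc d)
  then obtain w where w: "adj m y w" "level m w = Suc i" "YA m z \<subseteq> YA m w" "YB m w \<subseteq> YB m z"
    using exists_adj_towards[OF Suc.prems(1-4)] by auto
  have "w \<in> Xv m" using w(1) by (simp add: adj_def)
  then have "raise m (Suc i) d w z \<noteq> 0" using Suc.IH Suc.prems w by simp
  then show ?case
    using w Suc.prems by (auto simp: mmult_nonzero_iff nat_valued_mmult nat_valued_raise
      generators_nonzero_iff adj_def)
qed

text \<open>From \<open>y0\<close>: exchange elements of \<open>A\<close>, then of \<open>B\<close>, then climb to the level of \<open>z0\<close>.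
  The numbers of exchanges are the least ones that can reach \<open>z0\<close>, so all pairs in the support
  have overlaps at least those of \<open>(y0, z0)\<close>.\<close>

definition probe :: "nat \<Rightarrow> nat set \<Rightarrow> nat set \<Rightarrow> mx" where
  "probe m y0 z0 = mmult m (mmult m
     (mpow m (swap_walk m False (level m y0)) (card (YA m z0 - YA m y0)))
     (mpow m (swap_walk m True (level m y0)) (card (YB m y0 - YB m z0))))
     (raise m (level m y0) (level m z0 - level m y0))"

lemma probe_in_Talg: "probe m y0 z0 \<in> Talg m"
  unfolding probe_def by (intro Talg.T_mult mpow_in_Talg swap_walk_in_Talg raise_in_Talg)

lemma probe_nonzero_iff:
  "probe m y0 z0 y z \<noteq> 0 \<longleftrightarrow> (\<exists>v u.
     mpow m (swap_walk m False (level m y0)) (card (YA m z0 - YA m y0)) y v \<noteq> 0 \<and>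
     mpow m (swap_walk m True (level m y0)) (card (YB m y0 - YB m z0)) v u \<noteq> 0 \<and>
     raise m (level m y0) (level m z0 - level m y0) u z \<noteq> 0)"
  unfolding probe_def
  by (simp add: mmult_nonzero_iff nat_valued_mmult nat_valued_mpow nat_valued_swap_walk nat_valued_raise)
    (blast dest: swap_power_nonzero_dest)

lemma probe_nonzero_at:
  assumes y0: "y0 \<in> Xv m" and z0: "z0 \<in> Xv m" and le: "level m y0 \<le> level m z0"
  shows "probe m y0 z0 y0 z0 \<noteq> 0"
proof -
  have fin: "finite (YA m y0)" "finite (YA m z0)" "finite (YB m y0)" "finite (YB m z0)"
    using y0 z0 Xv_finite by auto
  have cards: "card (YA m z0) \<le> card (YA m y0)" "card (YB m y0) \<le> card (YB m z0)"
    using level_le_cards[OF y0 z0 le] by auto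
  obtain V where V: "YA m z0 \<subseteq> V" "V \<subseteq> YA m y0 \<union> YA m z0" "card V = card (YA m y0)"
      "card (YA m y0 - V) = card (YA m z0 - YA m y0)"
    using exists_superset_of_card[OF fin(1,2) cards(1)] by blast
  obtain W where W: "W \<subseteq> YB m z0" "YB m y0 \<inter> YB m z0 \<subseteq> W" "card W = card (YB m y0)"
      "card (YB m y0 - W) = card (YB m y0 - YB m z0)"
    using exists_subset_of_card[OF fin(3,4) cards(2)] by blast
  have VA: "V \<subseteq> Aset m" and WB: "W \<subseteq> Bset m" using V(2) W(1) by auto
  have card_y0: "card (YA m y0) + card (YB m y0) = m \<or> card (YA m y0) + card (YB m y0) = m + 1"
    using card_split[of y0 m] y0 by (auto simp: Xv_iff)
  have YB_y0: "YB m y0 \<subseteq> Bset m" by blast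
  note v = YA_YB_Un[OF VA YB_y0] and u = YA_YB_Un[OF VA WB]
  have vX: "V \<union> YB m y0 \<in> Xv m" and uX: "V \<union> W \<in> Xv m"
    using Xv_of_parts[OF VA YB_y0] Xv_of_parts[OF VA WB] V(3) W(3) card_y0 by auto
  have card_v: "card (V \<union> YB m y0) = card y0" and card_u: "card (V \<union> W) = card y0"
    using card_split[of "V \<union> YB m y0" m] card_split[of "V \<union> W" m] card_split[of y0 m]
      vX uX y0 v(1,2) u(1,2) V(3) W(3) by (auto simp: Xv_iff)
  have level_v: "level m (V \<union> YB m y0) = level m y0" and level_u: "level m (V \<union> W) = level m y0"
    using vX uX y0 v(1,2) u(1,2) V(3) W(3) by (simp_all add: level_eq_iff)
  have "mpow m (swap_walk m False (level m y0)) (card (YA m z0 - YA m y0)) y0 (V \<union> YB m y0) \<noteq> 0"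
    using swap_power_nonzero_intro[OF y0 vX] card_v v(1,2) V(4) by simp
  moreover have "mpow m (swap_walk m True (level m y0)) (card (YB m y0 - YB m z0))
      (V \<union> YB m y0) (V \<union> W) \<noteq> 0"
    using swap_power_nonzero_intro[OF vX uX] card_v card_u v(1,2) u(1,2) W(4) level_v by simp
  moreover have "raise m (level m y0) (level m z0 - level m y0) (V \<union> W) z0 \<noteq> 0"
    using raise_nonzero_intro[OF uX z0] u(1,2) V(1) W(1) level_u le by simp
  ultimately show ?thesis by (auto simp: probe_nonzero_iff)
qed

lemma probe_nonzero_dest:
  assumes y0: "y0 \<in> Xv m" and z0: "z0 \<in> Xv m" and le: "level m y0 \<le> level m z0"
    and nz: "probe m y0 z0 y z \<noteq> 0"
  shows "y \<in> Xv m \<and> z \<in> Xv m \<and> level m y = level m y0 \<and> level m z = level m z0 \<and>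
    card (y0 \<inter> z0 \<inter> Aset m) \<le> card (y \<inter> z \<inter> Aset m) \<and> card (y0 \<inter> z0 \<inter> Bset m) \<le> card (y \<inter> z \<inter> Bset m)"
proof -
  obtain v u where
    "mpow m (swap_walk m False (level m y0)) (card (YA m z0 - YA m y0)) y v \<noteq> 0"
    "mpow m (swap_walk m True (level m y0)) (card (YB m y0 - YB m z0)) v u \<noteq> 0"
    "raise m (level m y0) (level m z0 - level m y0) u z \<noteq> 0"
    using nz probe_nonzero_iff by blast
  note A = swap_power_nonzero_dest[OF this(1), simplified]
    and B = swap_power_nonzero_dest[OF this(2), simplified]
    and R = raise_nonzero_dest[OF this(3)]
  have levels: "level m y = level m y0" "level m z = level m z0" "level m u = level m y0"
    using A B R le by auto
  have cards: "card (YA m y) = card (YA m y0)" "card (YB m y) = card (YB m y0)"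
      "card (YA m z) = card (YA m z0)" "card (YA m u) = card (YA m y0)"
    using level_eq_iff levels A B R y0 z0 by metis+
  have fin: "finite (YA m y)" "finite (YA m u)" "finite (YB m y)" "finite (YA m y0)" "finite (YA m z0)"
    "finite (YB m y0)"
    using A B y0 z0 Xv_finite by blast+
  have "card (YA m y - YA m z) \<le> card (YA m y0 - YA m z0)"
    using card_Diff_le_through_superset[OF fin(1,2,4,5)] A B R cards by simp
  then have overlap_A: "card (YA m y0 \<inter> YA m z0) \<le> card (YA m y \<inter> YA m z)"
    using card_Int_ge_if_card_Diff_le fin(1,4) cards(1) by blast
  have "YB m y - YB m z \<subseteq> YB m y - YB m u" using R by blast
  then have "card (YB m y - YB m z) \<le> card (YB m y0 - YB m z0)"
    using A B fin(3) card_mono[of "YB m y - YB m u" "YB m y - YB m z"] by simp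
  then have overlap_B: "card (YB m y0 \<inter> YB m z0) \<le> card (YB m y \<inter> YB m z)"
    using card_Int_ge_if_card_Diff_le fin(3,6) cards(2) by blast
  have "y \<in> Xv m" "z \<in> Xv m" using A R by blast+
  then show ?thesis
    using overlap_A overlap_B levels(1,2)
    by (simp add: Int_ac)
qed

section \<open>The algebra contains every orbit indicator\<close>

definition mtranspose :: "mx \<Rightarrow> mx" where
  "mtranspose M = (\<lambda>y z. M z y)"

lemma mtranspose_in_Talg: "M \<in> Talg m \<Longrightarrow> mtranspose M \<in> Talg m"
proof (induction rule: Talg.induct)
  case T_A
  have "mtranspose (A1 m) = A1 m" by (auto simp: mtranspose_def A1_def adj_def fun_eq_iff)
  then show ?case using Talg.T_A by simp
next
  case (T_E i)
  have "mtranspose (Estar m i) = Estar m i" by (auto simp: mtranspose_def Estar_def fun_eq_iff)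
  then show ?case using Talg.T_E[OF T_E] by simp
next
  case T_I
  have "mtranspose (Imx m) = Imx m" by (auto simp: mtranspose_def Imx_def fun_eq_iff)
  then show ?case using Talg.T_I by simp
next
  case (T_add M N)
  have "mtranspose (M + N) = mtranspose M + mtranspose N" by (simp add: mtranspose_def fun_eq_iff)
  then show ?case using Talg.T_add[OF T_add.IH] by (simp only:)
next
  case (T_scale M c)
  have "mtranspose (mscale c M) = mscale c (mtranspose M)"
    by (simp add: mtranspose_def mscale_def fun_eq_iff)
  then show ?case using Talg.T_scale[OF T_scale.IH] by simp
next
  case (T_mult M N)
  have "mtranspose (mmult m M N) = mmult m (mtranspose N) (mtranspose M)"
    by (simp add: mtranspose_def mmult_def fun_eq_iff mult.commute)
  then show ?case using Talg.T_mult[OF T_mult.IH(2) T_mult.IH(1)] by simp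
qed

definition overlap :: "nat \<times> nat \<times> nat \<times> nat \<times> nat \<times> nat \<Rightarrow> nat" where
  "overlap = (\<lambda>(p, s, q, t, r, \<rho>). r + \<rho>)"

lemma probe_support_triangular:
  assumes y0: "y0 \<in> Xv m" and z0: "z0 \<in> Xv m" and le: "level m y0 \<le> level m z0"
    and "y \<in> Xv m" "z \<in> Xv m" "probe m y0 z0 y z \<noteq> 0"
  shows "orbit_type m y z = orbit_type m y0 z0 \<or>
    level m y \<le> level m z \<and> overlap (orbit_type m y0 z0) < overlap (orbit_type m y z)"
proof -
  note supp = probe_nonzero_dest[OF y0 z0 le assms(6)]
  then have "card (YA m y) = card (YA m y0)" "card (YB m y) = card (YB m y0)"
    "card (YA m z) = card (YA m z0)" "card (YB m z) = card (YB m z0)"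
    using level_eq_iff y0 z0 by metis+
  then show ?thesis using supp le by (auto simp: orbit_type_def overlap_def)
qed

lemma orbit_indicator_in_Talg_ordered:
  assumes "y0 \<in> Xv m" "z0 \<in> Xv m" "level m y0 \<le> level m z0"
  shows "class_indicator (Xv m) (orbit_type m) (orbit_type m y0 z0) \<in> Talg m"
proof -
  let ?C = "{orbit_type m y z | y z. y \<in> Xv m \<and> z \<in> Xv m \<and> level m y \<le> level m z}"
  have tri: "\<exists>P\<in>Talg m. (\<exists>y\<in>Xv m. \<exists>z\<in>Xv m. orbit_type m y z = c \<and> P y z \<noteq> 0) \<and>
      (\<forall>y\<in>Xv m. \<forall>z\<in>Xv m. P y z \<noteq> 0 \<longrightarrow>
        orbit_type m y z = c \<or> orbit_type m y z \<in> ?C \<and> overlap c < overlap (orbit_type m y z))"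
    if c: "c \<in> ?C" for c
  proof -
    obtain y0 z0 where yz0: "y0 \<in> Xv m" "z0 \<in> Xv m" "level m y0 \<le> level m z0" "c = orbit_type m y0 z0"
      using c by blast
    have "\<exists>y\<in>Xv m. \<exists>z\<in>Xv m. orbit_type m y z = c \<and> probe m y0 z0 y z \<noteq> 0"
      using yz0 probe_nonzero_at[OF yz0(1-3)] by blast
    moreover have "orbit_type m y z = c \<or> orbit_type m y z \<in> ?C \<and> overlap c < overlap (orbit_type m y z)"
      if "y \<in> Xv m" "z \<in> Xv m" "probe m y0 z0 y z \<noteq> 0" for y z
      using probe_support_triangular[OF yz0(1-3) that] that(1,2) yz0(4) by blast
    ultimately show ?thesis using probe_in_Talg by blast
  qed
  have "c \<in> ?C \<Longrightarrow> class_indicator (Xv m) (orbit_type m) c \<in> Talg m" for c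
    by (rule class_indicator_mem_triangular[OF finite_Xv subspace_Talg Talg_subset_class_functions tri])
  then show ?thesis using assms by blast
qed

lemma orbit_type_swap_eq_iff: "orbit_type m z y = orbit_type m z' y' \<longleftrightarrow> orbit_type m y z = orbit_type m y' z'"
  by (auto simp: orbit_type_def Int_commute)

lemma orbit_indicator_in_Talg:
  assumes "c \<in> classes (Xv m) (orbit_type m)"
  shows "class_indicator (Xv m) (orbit_type m) c \<in> Talg m"
proof -
  obtain y z where yz: "y \<in> Xv m" "z \<in> Xv m" "c = orbit_type m y z"
    using assms by (auto simp: classes_def)
  show ?thesis
  proof (cases "level m y \<le> level m z")
    case True
    then show ?thesis using orbit_indicator_in_Talg_ordered yz by simp
  next
    case False
    then have "class_indicator (Xv m) (orbit_type m) (orbit_type m z y) \<in> Talg m"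
      using orbit_indicator_in_Talg_ordered yz by simp
    note mtranspose_in_Talg[OF this]
    moreover have "mtranspose (class_indicator (Xv m) (orbit_type m) (orbit_type m z y)) =
        class_indicator (Xv m) (orbit_type m) c"
      using yz by (auto simp: mtranspose_def class_indicator_def orbit_type_swap_eq_iff fun_eq_iff)
    ultimately show ?thesis by simp
  qed
qed

theorem dim_Talg: "mx.dim (Talg m) = card (classes (Xv m) (orbit_type m))"
  by (rule dim_eq_card_classes[OF finite_Xv Talg_subset_class_functions])
    (auto intro: orbit_indicator_in_Talg)

section \<open>Counting orbit types\<close>

definition orbit_tuples :: "nat \<Rightarrow> (nat \<times> nat \<times> nat \<times> nat \<times> nat \<times> nat) set" where
  "orbit_tuples m = {(p, s, q, t, r, \<rho>). (p + s = m \<or> p + s = m + 1) \<and> (q + t = m \<or> q + t = m + 1) \<and>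
     r \<le> p \<and> r \<le> q \<and> p + q \<le> m + r \<and> \<rho> \<le> s \<and> \<rho> \<le> t \<and> s + t \<le> m + 1 + \<rho>}"

lemma orbit_type_in_orbit_tuples:
  assumes y: "y \<in> Xv m" and z: "z \<in> Xv m"
  shows "orbit_type m y z \<in> orbit_tuples m"
proof -
  have fin: "finite (YA m y)" "finite (YA m z)" "finite (YB m y)" "finite (YB m z)"
    using y z Xv_finite by blast+
  have "card (YA m y \<union> YA m z) \<le> m" "card (YB m y \<union> YB m z) \<le> m + 1"
    using card_mono[of "Aset m" "YA m y \<union> YA m z"] card_mono[of "Bset m" "YB m y \<union> YB m z"] by auto
  then have "card (YA m y) + card (YA m z) \<le> m + card (YA m y \<inter> YA m z)"
    "card (YB m y) + card (YB m z) \<le> m + 1 + card (YB m y \<inter> YB m z)"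
    using card_Un_Int[OF fin(1,2)] card_Un_Int[OF fin(3,4)] by simp_all
  moreover have "card (YA m y \<inter> YA m z) \<le> card (YA m y)" "card (YA m y \<inter> YA m z) \<le> card (YA m z)"
    "card (YB m y \<inter> YB m z) \<le> card (YB m y)" "card (YB m y \<inter> YB m z) \<le> card (YB m z)"
    using fin by (auto intro: card_mono)
  moreover have "card y = card (YA m y) + card (YB m y)" "card z = card (YA m z) + card (YB m z)"
    using card_split y z by (auto simp: Xv_iff)
  ultimately show ?thesis
    using y z by (auto simp: orbit_tuples_def orbit_type_def Xv_iff Int_ac)
qed

lemma orbit_tuple_realised:
  assumes "x \<in> orbit_tuples m"
  obtains y z where "y \<in> Xv m" "z \<in> Xv m" "orbit_type m y z = x"
proof -
  obtain p s q t r \<rho> where xe: "x = (p, s, q, t, r, \<rho>)" by (cases x)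
  have h: "p + s = m \<or> p + s = m + 1" "q + t = m \<or> q + t = m + 1"
    "r \<le> p" "r \<le> q" "p + q \<le> card (Aset m) + r" "\<rho> \<le> s" "\<rho> \<le> t" "s + t \<le> card (Bset m) + \<rho>"
    using assms xe by (auto simp: orbit_tuples_def)
  obtain u v where uv: "u \<subseteq> Aset m" "v \<subseteq> Aset m" "card u = p" "card v = q" "card (u \<inter> v) = r"
    using exists_subsets_with_cards[OF finite_Aset h(3-5)] by blast
  obtain u' v' where uv': "u' \<subseteq> Bset m" "v' \<subseteq> Bset m" "card u' = s" "card v' = t" "card (u' \<inter> v') = \<rho>"
    using exists_subsets_with_cards[OF finite_Bset h(6-8)] by blast
  have "u \<union> u' \<in> Xv m" "v \<union> v' \<in> Xv m"
    using Xv_of_parts[OF uv(1) uv'(1)] Xv_of_parts[OF uv(2) uv'(2)] uv uv' h by auto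
  moreover have "(u \<union> u') \<inter> (v \<union> v') \<inter> Aset m = u \<inter> v" "(u \<union> u') \<inter> (v \<union> v') \<inter> Bset m = u' \<inter> v'"
    using uv(1,2) uv'(1,2) notin_Bset_if_in_Aset by auto
  then have "orbit_type m (u \<union> u') (v \<union> v') = x"
    using YA_YB_Un[OF uv(1) uv'(1)] YA_YB_Un[OF uv(2) uv'(2)] uv uv' xe by (simp add: orbit_type_def)
  ultimately show thesis using that by blast
qed

lemma classes_orbit_type: "classes (Xv m) (orbit_type m) = orbit_tuples m"
proof (intro equalityI subsetI)
  fix x assume "x \<in> classes (Xv m) (orbit_type m)"
  then obtain y z where "y \<in> Xv m" "z \<in> Xv m" "x = orbit_type m y z" by (auto simp: classes_def)
  then show "x \<in> orbit_tuples m" using orbit_type_in_orbit_tuples by simp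
next
  fix x assume "x \<in> orbit_tuples m"
  then obtain y z where "y \<in> Xv m" "z \<in> Xv m" "orbit_type m y z = x" by (rule orbit_tuple_realised)
  then show "x \<in> classes (Xv m) (orbit_type m)" using classesI by metis
qed

text \<open>Lattice points under the square pyramid over \<open>[0, n]\<^sup>2\<close>; \<open>pyramid_pairs m\<close> is in
  bijection with the orbit types of pairs with \<open>|y| = |z| = m\<close>.\<close>

definition pyramid :: "nat \<Rightarrow> (nat \<times> nat \<times> nat) set" where
  "pyramid n = {(s, t, h). h \<le> s \<and> h \<le> t \<and> h + s \<le> n \<and> h + t \<le> n}"

definition pyramid_pairs :: "nat \<Rightarrow> (nat \<times> nat \<times> nat \<times> nat) set" where
  "pyramid_pairs m = {(s, t, j, h). (s, t, j) \<in> pyramid m \<and> (s, t, h) \<in> pyramid (m + 1)}"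

lemma finite_pyramid: "finite (pyramid n)"
  by (rule finite_subset[of _ "{..n} \<times> {..n} \<times> {..n}"]) (auto simp: pyramid_def)

lemma finite_pyramid_pairs: "finite (pyramid_pairs m)"
  by (rule finite_subset[of _ "{..m+1} \<times> {..m+1} \<times> {..m+1} \<times> {..m+1}"])
    (auto simp: pyramid_pairs_def pyramid_def)

lemma pyramid_add_2:
  "pyramid (n + 2) = (\<lambda>(s, t). (s, t, 0)) ` ({..n+2} \<times> {..n+2}) \<union>
     (\<lambda>(s, t, h). (Suc s, Suc t, Suc h)) ` pyramid n"
proof (intro equalityI subsetI)
  fix x assume x: "x \<in> pyramid (n + 2)"
  obtain s t h where xe: "x = (s, t, h)" by (cases x)
  show "x \<in> (\<lambda>(s, t). (s, t, 0)) ` ({..n+2} \<times> {..n+2}) \<union> (\<lambda>(s, t, h). (Suc s, Suc t, Suc h)) ` pyramid n"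
  proof (cases "h = 0")
    case False
    then have "(s - 1, t - 1, h - 1) \<in> pyramid n" "x = (Suc (s - 1), Suc (t - 1), Suc (h - 1))"
      using x xe by (auto simp: pyramid_def)
    then show ?thesis by (intro UnI2 rev_image_eqI[of "(s - 1, t - 1, h - 1)"]) auto
  qed (use x xe in \<open>auto simp: pyramid_def\<close>)
qed (auto simp: pyramid_def)

lemma card_pyramid_add_2: "card (pyramid (n + 2)) = (n + 3)\<^sup>2 + card (pyramid n)"
proof -
  have "card ((\<lambda>(s, t). (s, t, 0::nat)) ` ({..n+2} \<times> {..n+2})) = (n + 3)\<^sup>2"
    by (subst card_image) (auto simp: inj_on_def power2_eq_square algebra_simps)
  moreover have "card ((\<lambda>(s, t, h). (Suc s, Suc t, Suc h)) ` pyramid n) = card (pyramid n)"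
    by (rule card_image) (auto simp: inj_on_def)
  ultimately show ?thesis
    unfolding pyramid_add_2 using finite_pyramid
    by (subst card_Un_disjoint) auto
qed

lemma card_pyramid_consecutive: "6 * (card (pyramid n) + card (pyramid (n + 1))) = (n + 2) * (n + 3) * (2 * n + 5)"
proof (induction n rule: nat_induct2)
  case 0
  have "pyramid 0 = {(0, 0, 0)}" "pyramid 1 = {(0, 0, 0), (0, 1, 0), (1, 0, 0), (1, 1, 0)}"
    by (auto simp: pyramid_def)
  then show ?case by simp
next
  case 1
  have "pyramid 1 = {(0, 0, 0), (0, 1, 0), (1, 0, 0), (1, 1, 0)}" "pyramid 0 = {(0, 0, 0)}"
    by (auto simp: pyramid_def)
  then show ?case using card_pyramid_add_2[of 0] by simp
next
  case (step n)
  then show ?case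
    using card_pyramid_add_2[of n] card_pyramid_add_2[of "n + 1"]
    by (simp add: power2_eq_square algebra_simps)
qed

lemma pyramid_pairs_add_2:
  "pyramid_pairs (m + 2) = (\<lambda>(s, t). (s, t, 0, 0)) ` ({..m+2} \<times> {..m+2}) \<union>
     (\<lambda>(s, t, h). (Suc s, Suc t, 0, Suc h)) ` pyramid (m + 1) \<union>
     (\<lambda>(s, t, j). (Suc s, Suc t, Suc j, 0)) ` pyramid m \<union>
     (\<lambda>(s, t, j, h). (Suc s, Suc t, Suc j, Suc h)) ` pyramid_pairs m"
  (is "_ = ?D0 \<union> ?D1 \<union> ?D2 \<union> ?D3")
proof (intro equalityI subsetI)
  fix x assume x: "x \<in> pyramid_pairs (m + 2)"
  obtain s t j h where xe: "x = (s, t, j, h)" by (cases x)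
  consider "j = 0" "h = 0" | "j = 0" "h \<noteq> 0" | "j \<noteq> 0" "h = 0" | "j \<noteq> 0" "h \<noteq> 0" by blast
  then show "x \<in> ?D0 \<union> ?D1 \<union> ?D2 \<union> ?D3"
  proof cases
    case 1
    then show ?thesis using x xe by (auto simp: pyramid_pairs_def pyramid_def)
  next
    case 2
    then have "(s - 1, t - 1, h - 1) \<in> pyramid (m + 1)" "x = (Suc (s - 1), Suc (t - 1), 0, Suc (h - 1))"
      using x xe by (auto simp: pyramid_pairs_def pyramid_def)
    then show ?thesis by (intro UnI1 UnI2 rev_image_eqI[of "(s - 1, t - 1, h - 1)"]) auto
  next
    case 3
    then have "(s - 1, t - 1, j - 1) \<in> pyramid m" "x = (Suc (s - 1), Suc (t - 1), Suc (j - 1), 0)"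
      using x xe by (auto simp: pyramid_pairs_def pyramid_def)
    then show ?thesis by (intro UnI1 UnI2 rev_image_eqI[of "(s - 1, t - 1, j - 1)"]) auto
  next
    case 4
    then have "(s - 1, t - 1, j - 1, h - 1) \<in> pyramid_pairs m"
      "x = (Suc (s - 1), Suc (t - 1), Suc (j - 1), Suc (h - 1))"
      using x xe by (auto simp: pyramid_pairs_def pyramid_def)
    then show ?thesis by (intro UnI2 rev_image_eqI[of "(s - 1, t - 1, j - 1, h - 1)"]) auto
  qed
qed (auto simp: pyramid_pairs_def pyramid_def)

lemma card_pyramid_pairs_add_2:
  "card (pyramid_pairs (m + 2)) =
     (m + 3)\<^sup>2 + card (pyramid (m + 1)) + card (pyramid m) + card (pyramid_pairs m)"
proof -
  let ?D0 = "(\<lambda>(s, t). (s, t, 0::nat, 0::nat)) ` ({..m+2} \<times> {..m+2})"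
  let ?D1 = "(\<lambda>(s, t, h). (Suc s, Suc t, 0::nat, Suc h)) ` pyramid (m + 1)"
  let ?D2 = "(\<lambda>(s, t, j). (Suc s, Suc t, Suc j, 0::nat)) ` pyramid m"
  let ?D3 = "(\<lambda>(s, t, j, h). (Suc s, Suc t, Suc j, Suc h)) ` pyramid_pairs m"
  have "card ((\<lambda>(s, t). (s, t, 0::nat, 0::nat)) ` ({..m+2} \<times> {..m+2})) = (m + 3)\<^sup>2"
    by (subst card_image) (auto simp: inj_on_def power2_eq_square algebra_simps)
  moreover have "card ((\<lambda>(s, t, h). (Suc s, Suc t, 0::nat, Suc h)) ` pyramid (m + 1)) = card (pyramid (m + 1))"
    "card ((\<lambda>(s, t, j). (Suc s, Suc t, Suc j, 0::nat)) ` pyramid m) = card (pyramid m)"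
    "card ((\<lambda>(s, t, j, h). (Suc s, Suc t, Suc j, Suc h)) ` pyramid_pairs m) = card (pyramid_pairs m)"
    by (auto intro!: card_image simp: inj_on_def)
  moreover have "?D0 \<inter> ?D1 = {}" "(?D0 \<union> ?D1) \<inter> ?D2 = {}" "(?D0 \<union> ?D1 \<union> ?D2) \<inter> ?D3 = {}"
    by auto
  moreover have "finite ?D0" "finite ?D1" "finite ?D2" "finite ?D3"
    using finite_pyramid finite_pyramid_pairs by auto
  ultimately show ?thesis
    unfolding pyramid_pairs_add_2 by (simp add: card_Un_disjoint)
qed

lemma card_pyramid_pairs_formula: "24 * card (pyramid_pairs m) = (m + 1) * (m + 2) * (m + 3) * (m + 4)"
proof (induction m rule: nat_induct2)
  case 0
  have "pyramid_pairs 0 = {(0, 0, 0, 0)}" by (auto simp: pyramid_pairs_def pyramid_def)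
  then show ?case by simp
next
  case 1
  have "pyramid_pairs 1 \<subseteq> {(0, 0, 0, 0), (0, 1, 0, 0), (1, 0, 0, 0), (1, 1, 0, 0), (1, 1, 0, 1)}"
  proof
    fix x assume x: "x \<in> pyramid_pairs 1"
    obtain s t j h where xe: "x = (s, t, j, h)" by (cases x)
    have "j = 0" "s \<le> 1" "t \<le> 1" "h \<le> s" "h \<le> t" using x xe by (auto simp: pyramid_pairs_def pyramid_def)
    then show "x \<in> {(0, 0, 0, 0), (0, 1, 0, 0), (1, 0, 0, 0), (1, 1, 0, 0), (1, 1, 0, 1)}"
      using xe by (auto simp: le_Suc_eq)
  qed
  moreover have "{(0, 0, 0, 0), (0, 1, 0, 0), (1, 0, 0, 0), (1, 1, 0, 0), (1, 1, 0, 1)} \<subseteq> pyramid_pairs 1"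
    by (simp add: pyramid_pairs_def pyramid_def)
  ultimately have "pyramid_pairs 1 = {(0, 0, 0, 0), (0, 1, 0, 0), (1, 0, 0, 0), (1, 1, 0, 0), (1, 1, 0, 1)}"
    by (rule antisym)
  then show ?case by simp
next
  case (step m)
  then show ?case
    using card_pyramid_pairs_add_2[of m] card_pyramid_consecutive[of m]
    by (simp add: power2_eq_square algebra_simps)
qed

lemma card_pyramid_pairs: "card (pyramid_pairs m) = (m + 4) choose 4"
proof -
  have "fact 4 * fact m * ((m + 4) choose 4) = (fact (m + 4) :: nat)"
    using binomial_fact_lemma[of 4 "m + 4"] by simp
  moreover have "fact (m + 4) = (m + 4) * (m + 3) * (m + 2) * (m + 1) * (fact m :: nat)"
    by (simp add: fact_Suc numeral_eq_Suc algebra_simps)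
  ultimately have "fact m * (24 * ((m + 4) choose 4)) = fact m * ((m + 1) * (m + 2) * (m + 3) * (m + 4))"
    by (simp add: fact_numeral algebra_simps)
  then have "24 * ((m + 4) choose 4) = (m + 1) * (m + 2) * (m + 3) * (m + 4)"
    using fact_nonzero[of m] by simp
  then show ?thesis
    using card_pyramid_pairs_formula[of m] by simp
qed

text \<open>Coordinates of an orbit type: \<open>|y| - m\<close> and \<open>|z| - m\<close>, the part sizes of \<open>y\<close> and \<open>z\<close>
  that range over \<open>[0, m]\<close> (the \<open>B\<close>-part if the vertex has \<open>m\<close> elements, the \<open>A\<close>-part
  otherwise), and the two overlaps minus their least possible values.\<close>

definition tuple_of_coords :: "nat \<Rightarrow> nat \<times> nat \<times> nat \<times> nat \<times> nat \<times> nat \<Rightarrow> nat \<times> nat \<times> nat \<times> nat \<times> nat \<times> nat" where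
  "tuple_of_coords m x = (case x of (e, e', s', t', j, h) \<Rightarrow>
     let p = (if e = 0 then m - s' else s'); s = (if e = 0 then s' else m + 1 - s');
         q = (if e' = 0 then m - t' else t'); t = (if e' = 0 then t' else m + 1 - t')
     in (p, s, q, t, j + (p + q - m), h + (s + t - (m + 1))))"

definition coords_of_tuple :: "nat \<Rightarrow> nat \<times> nat \<times> nat \<times> nat \<times> nat \<times> nat \<Rightarrow> nat \<times> nat \<times> nat \<times> nat \<times> nat \<times> nat" where
  "coords_of_tuple m v = (case v of (p, s, q, t, r, \<rho>) \<Rightarrow>
     (p + s - m, q + t - m, if p + s = m then s else p, if q + t = m then t else q,
      r - (p + q - m), \<rho> - (s + t - (m + 1))))"

lemma coords_of_tuple:
  "v \<in> orbit_tuples m \<Longrightarrow>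
    coords_of_tuple m v \<in> {0, 1} \<times> {0, 1} \<times> pyramid_pairs m \<and> tuple_of_coords m (coords_of_tuple m v) = v"
  by (cases v) (auto simp: orbit_tuples_def pyramid_pairs_def pyramid_def tuple_of_coords_def
    coords_of_tuple_def Let_def)

lemma tuple_of_coords:
  "x \<in> {0, 1} \<times> {0, 1} \<times> pyramid_pairs m \<Longrightarrow>
    tuple_of_coords m x \<in> orbit_tuples m \<and> coords_of_tuple m (tuple_of_coords m x) = x"
  by (cases x) (auto simp: orbit_tuples_def pyramid_pairs_def pyramid_def tuple_of_coords_def
    coords_of_tuple_def Let_def)

lemma card_orbit_tuples: "card (orbit_tuples m) = 4 * ((m + 4) choose 4)"
proof -
  have "bij_betw (tuple_of_coords m) ({0, 1} \<times> {0, 1} \<times> pyramid_pairs m) (orbit_tuples m)"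
  proof (rule bij_betw_byWitness[where f' = "coords_of_tuple m"])
    show "\<forall>x\<in>{0, 1} \<times> {0, 1} \<times> pyramid_pairs m. coords_of_tuple m (tuple_of_coords m x) = x"
      "tuple_of_coords m ` ({0, 1} \<times> {0, 1} \<times> pyramid_pairs m) \<subseteq> orbit_tuples m"
      using tuple_of_coords by blast+
    show "\<forall>v\<in>orbit_tuples m. tuple_of_coords m (coords_of_tuple m v) = v"
      "coords_of_tuple m ` orbit_tuples m \<subseteq> {0, 1} \<times> {0, 1} \<times> pyramid_pairs m"
      using coords_of_tuple by blast+
  qed
  then have "card (orbit_tuples m) = card ({0::nat, 1} \<times> {0::nat, 1} \<times> pyramid_pairs m)"
    by (simp add: bij_betw_same_card)
  then show ?thesis by (simp add: card_cartesian_product card_pyramid_pairs)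
qed

text \<open>The count holds for every \<open>m\<close>.\<close>

theorem corollary4p9:
  fixes m :: nat
  assumes "m \<ge> 3"
  shows "vector_space.dim mscale (Talg m) = 4 * ((m + 4) choose 4)"
  using dim_Talg classes_orbit_type card_orbit_tuples by simp

end
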